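(* For $x\in\mathbb{C}\setminus\{0,1\}$ in a small open set, consider the elliptic curve $v^2=u(u-1)(u-x)$. Let $\mathcal{A},\mathcal{B}$ be generators of its first homology, transported continuously in $x$ and avoiding the branch points and infinity. Let $\gamma=c_1\mathcal{A}+c_2\mathcal{B}$ with constants $c_1,c_2$. Set $$a_1=\oint_\gamma\frac{du}{uv},\qquad a_2=\oint_\gamma\frac{du}{(u-1)v}.$$ Then, wherever the denominator does not vanish, the function $$y(x)=\frac{x\,a_1}{x\,a_1+(x-1)\,a_2}=-\frac{x\oint_\gamma\frac{du}{uv}}{x\oint_\gamma\frac{du}{(u-x)v}+\oint_\gamma\frac{du}{(u-1)v}}$$ solves the Painlevé VI equation with parameters $(\hat\alpha,\hat\beta,\hat\gamma,\hat\delta)=(1/8,-1/8,1/8,3/8)$.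
   Context: The Painlevé VI equation with parameters $\hat\alpha,\hat\beta,\hat\gamma,\hat\delta$ is $$y''=\tfrac12\Big(\tfrac1y+\tfrac1{y-1}+\tfrac1{y-x}\Big)(y')^2-\Big(\tfrac1x+\tfrac1{x-1}+\tfrac1{y-x}\Big)y'+\frac{y(y-1)(y-x)}{x^2(x-1)^2}\Big(\hat\alpha+\hat\beta\frac{x}{y^2}+\hat\gamma\frac{x-1}{(y-1)^2}+\hat\delta\frac{x(x-1)}{(y-x)^2}\Big).$$ *)

theory Defs
  imports "HOL-Complex_Analysis.Complex_Analysis"
begin

text \<open>A loop on the affine elliptic curve v^2 = u(u-1)(u-x), represented by its
projection g to the u-plane (a closed piecewise-smooth path avoiding the branch
points 0, 1, x) together with a continuous choice v of the square root along it
(which returns to its initial value, so the lift is closed on the curve).\<close>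

definition lifted_cycle_family ::
  "complex set \<Rightarrow> (complex \<Rightarrow> real \<Rightarrow> complex) \<Rightarrow> (complex \<Rightarrow> real \<Rightarrow> complex) \<Rightarrow> bool" where
  "lifted_cycle_family U g v \<longleftrightarrow>
     continuous_on (U \<times> {0..1}) (\<lambda>(x, t). g x t) \<and>
     continuous_on (U \<times> {0..1}) (\<lambda>(x, t). v x t) \<and>
     (\<forall>x\<in>U. valid_path (g x) \<and> pathfinish (g x) = pathstart (g x) \<and> v x 1 = v x 0 \<and>
        (\<forall>t\<in>{0..1}. g x t \<notin> {0, 1, x} \<and> (v x t)\<^sup>2 = g x t * (g x t - 1) * (g x t - x)))"

definition curve_period ::
  "(complex \<Rightarrow> complex) \<Rightarrow> (real \<Rightarrow> complex) \<Rightarrow> (real \<Rightarrow> complex) \<Rightarrow> complex" where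
  "curve_period f g v =
     integral {0..1} (\<lambda>t. f (g t) / v t * vector_derivative g (at t within {0..1}))"

definition painleve_VI ::
  "complex \<Rightarrow> complex \<Rightarrow> complex \<Rightarrow> complex \<Rightarrow> (complex \<Rightarrow> complex) \<Rightarrow> complex \<Rightarrow> bool" where
  "painleve_VI al be ga de y x \<longleftrightarrow>
     (let Y = y x; Y' = deriv y x; Y'' = deriv (deriv y) x in
      Y'' = 1/2 * (1/Y + 1/(Y - 1) + 1/(Y - x)) * Y'\<^sup>2
            - (1/x + 1/(x - 1) + 1/(Y - x)) * Y'
            + Y * (Y - 1) * (Y - x) / (x\<^sup>2 * (x - 1)\<^sup>2)
              * (al + be * x / Y\<^sup>2 + ga * (x - 1) / (Y - 1)\<^sup>2 + de * x * (x - 1) / (Y - x)\<^sup>2))"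

end

theory Submission
  imports Defs
begin

text \<open>Near a parameter \<open>x0\<close> the cycle is cut into short arcs; on the arc near a centre \<open>c\<close> the lift
  \<open>v\<close> is the branch \<open>A \<surd>(u/c) \<surd>((u-1)/(c-1)) \<surd>((u-x)/(c-x0))\<close> of \<open>\<surd>(u (u-1) (u-x))\<close>, which is
  holomorphic in \<open>u\<close> and \<open>x\<close>. By Cauchy's theorem the period is a sum of integrals over the chords
  between consecutive centres; these chords do not move with \<open>x\<close>, so one may differentiate under
  the integral sign, using \<open>\<partial>\<^sub>x (1/v) = 1/(2 (u - x) v)\<close>. Partial fractions express the result
  through the two periods and the exact form \<open>(1/u + 1/(u-1) + 1/(u-x)) du/v = -2 d(1/v)\<close>, which
  gives the Gauss--Manin system \<open>a1' = -(2 a1 + a2)/(2 x)\<close>, \<open>a2' = (a1 + 2 a2)/(2 (1 - x))\<close>.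
  The system is linear, so it holds for every combination of cycles, and for any solution the
  quotient \<open>y = x a1/(x a1 + (x - 1) a2)\<close> has \<open>y' = (x a1\<^sup>2 + (1 - x) a2\<^sup>2)/(2 (x a1 + (x - 1) a2)\<^sup>2)\<close>;
  substituting \<open>y\<close>, \<open>y'\<close>, \<open>y''\<close> into Painleve VI with parameters \<open>(1/8, -1/8, 1/8, 3/8)\<close> leaves a
  polynomial identity.\<close>

lemma continuous_sqrt_branches_eq:
  fixes f g :: "'a::topological_space \<Rightarrow> complex"
  assumes S: "connected S" and cf: "continuous_on S f" and cg: "continuous_on S g"
    and sq: "\<And>z. z \<in> S \<Longrightarrow> f z ^ 2 = g z ^ 2" and nz: "\<And>z. z \<in> S \<Longrightarrow> g z \<noteq> 0"
    and z0: "z0 \<in> S" "f z0 = g z0" and z: "z \<in> S"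
  shows "f z = g z"
proof -
  define q where "q = (\<lambda>z. f z / g z)"
  have "continuous_on S q" unfolding q_def using cf cg nz by (intro continuous_intros) auto
  then have conn: "connected (q ` S)" using S by (rule connected_continuous_image)
  have "q ` S \<subseteq> {1, -1}"
  proof
    fix w assume "w \<in> q ` S"
    then obtain z where z: "z \<in> S" "w = q z" by auto
    have "(f z / g z)^2 = 1" using sq[OF z(1)] nz[OF z(1)] by (simp add: power_divide)
    then show "w \<in> {1, -1}" using z q_def by (auto simp: power2_eq_1_iff)
  qed
  then have "finite (q ` S)" using finite_subset by blast
  then obtain a where a: "q ` S = {a}" using connected_finite_iff_sing[OF conn] z0 by auto
  have "q z0 = 1" using z0 nz unfolding q_def by auto
  then have "q z = 1" using a z0 z by (metis image_eqI singletonD)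
  then show ?thesis using nz[OF z] unfolding q_def by (simp add: divide_eq_eq)
qed

lemma divide_notin_nonpos_Reals:
  fixes u c :: complex
  assumes "norm (u - c) < norm c"
  shows "u / c \<notin> \<real>\<^sub>\<le>\<^sub>0"
proof
  assume "u / c \<in> \<real>\<^sub>\<le>\<^sub>0"
  then obtain r where r: "u / c = of_real r" "r \<le> 0" by (auto simp: nonpos_Reals_def)
  have "c \<noteq> 0" using assms by auto
  then have "u / c - 1 = (u - c) / c" by (simp add: diff_divide_distrib)
  then have "norm (u / c - 1) < 1"
    using assms \<open>c \<noteq> 0\<close> by (simp add: norm_divide divide_less_eq)
  moreover have "norm (u / c - 1) = \<bar>r - 1\<bar>"
    using r(1) by (metis norm_of_real of_real_1 of_real_diff)
  ultimately show False using r(2) by simp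
qed

lemma primitive_increments_eq:
  fixes G1 G2 :: "complex \<Rightarrow> complex"
  assumes "convex S"
    and "\<And>u. u \<in> S \<Longrightarrow> (G1 has_field_derivative F u) (at u)"
    and "\<And>u. u \<in> S \<Longrightarrow> (G2 has_field_derivative F u) (at u)"
    and "u \<in> S" "w \<in> S"
  shows "G1 u - G1 w = G2 u - G2 w"
proof -
  have "\<exists>c. \<forall>z\<in>S. G1 z - G2 z = c"
  proof (rule has_field_derivative_zero_constant[OF assms(1)])
    fix z assume "z \<in> S"
    then have "((\<lambda>z. G1 z - G2 z) has_field_derivative F z - F z) (at z)"
      using assms by (intro derivative_intros) auto
    then show "((\<lambda>z. G1 z - G2 z) has_field_derivative 0) (at z within S)"
      by (simp add: has_field_derivative_at_within)
  qed
  then show ?thesis using assms(4,5) by (auto simp: algebra_simps)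
qed

lemma has_integral_primitive_subpath:
  fixes \<gamma> V :: "real \<Rightarrow> complex"
  assumes vp: "valid_path \<gamma>" and ab: "0 \<le> a" "a < b" "b \<le> 1"
    and G: "\<And>u. u \<in> S \<Longrightarrow> (G has_field_derivative F u) (at u)"
    and inS: "\<And>s. s \<in> {a..b} \<Longrightarrow> \<gamma> s \<in> S"
    and FV: "\<And>s. s \<in> {a..b} \<Longrightarrow> f (\<gamma> s) / V s = F (\<gamma> s)"
  shows "((\<lambda>t. f (\<gamma> t) / V t * vector_derivative \<gamma> (at t within {0..1}))
           has_integral G (\<gamma> b) - G (\<gamma> a)) {a..b}"
proof -
  obtain K where K: "finite K" "\<And>t. t \<in> {0..1} - K \<Longrightarrow> \<gamma> differentiable at t"
    using vp unfolding valid_path_def piecewise_C1_differentiable_on_def C1_differentiable_on_eq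
    by blast
  have "\<gamma> piecewise_differentiable_on {a..b}"
    using vp ab unfolding valid_path_def
    by (auto intro: piecewise_differentiable_on_subset[OF piecewise_C1_imp_differentiable])
  then have I: "((\<lambda>t. F (\<gamma> t) * vector_derivative \<gamma> (at t within {a..b}))
                 has_integral G (\<gamma> b) - G (\<gamma> a)) {a..b}"
    using contour_integral_primitive_lemma[of a b S G F \<gamma>] ab inS G
    by (auto simp: has_field_derivative_at_within)
  show ?thesis
  proof (rule has_integral_spike_finite[OF _ _ I])
    show "finite (K \<union> {a, b})" using K by auto
    fix t assume t: "t \<in> {a..b} - (K \<union> {a, b})"
    then have d: "\<gamma> differentiable at t" using K ab by auto
    have "vector_derivative \<gamma> (at t within {c..d}) = vector_derivative \<gamma> (at t)"
      if "c \<le> t" "t \<le> d" "c < d" for c d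
      using d that vector_derivative_at_within_ivl vector_derivative_works by blast
    then have "vector_derivative \<gamma> (at t within {0..1}) = vector_derivative \<gamma> (at t)"
              "vector_derivative \<gamma> (at t within {a..b}) = vector_derivative \<gamma> (at t)"
      using t ab by auto
    then show "f (\<gamma> t) / V t * vector_derivative \<gamma> (at t within {0..1})
             = F (\<gamma> t) * vector_derivative \<gamma> (at t within {a..b})"
      using FV t by auto
  qed
qed

lemma has_integral_uniform_partition:
  fixes f :: "real \<Rightarrow> 'a::banach"
  assumes N: "N > 0"
    and pieces: "\<And>k. k < N \<Longrightarrow> (f has_integral I k) {real k / N .. real (Suc k) / N}"
  shows "(f has_integral (\<Sum>k<N. I k)) {0..1}"
proof -
  have "(f has_integral (\<Sum>k<m. I k)) {0 .. real m / N}" if "m \<le> N" for m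
    using that
  proof (induction m)
    case 0
    then show ?case using has_integral_refl(2)[of f 0] by simp
  next
    case (Suc m)
    have "real m / N \<le> real (Suc m) / N" using N by (simp add: divide_right_mono)
    then show ?case
      using has_integral_combine[OF _ _ Suc.IH pieces] Suc.prems by (simp add: add.commute)
  qed
  from this[of N] show ?thesis using N by simp
qed

lemma has_integral_closed_path_primitives:
  fixes \<gamma> V :: "real \<Rightarrow> complex" and c :: "nat \<Rightarrow> complex" and h G :: "nat \<Rightarrow> complex \<Rightarrow> complex"
  assumes vp: "valid_path \<gamma>" and closed: "\<gamma> 1 = \<gamma> 0" and N: "N > 0"
    and G: "\<And>k u. k \<le> N \<Longrightarrow> u \<in> ball (c k) R \<Longrightarrow> (G k has_field_derivative f u / h k u) (at u)"
    and arc: "\<And>k s. k < N \<Longrightarrow> s \<in> {real k / N .. real (Suc k) / N} \<Longrightarrow>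
                \<gamma> s \<in> ball (c k) R \<and> V s = h k (\<gamma> s)"
    and next_centre: "\<And>k. k < N \<Longrightarrow> c (Suc k) \<in> ball (c k) R"
    and overlap: "\<And>k u. k < N \<Longrightarrow> u \<in> ball (c k) R \<inter> ball (c (Suc k)) R \<Longrightarrow> h k u = h (Suc k) u"
    and cN: "c N = c 0" and hN: "h N = h 0"
  shows "((\<lambda>t. f (\<gamma> t) / V t * vector_derivative \<gamma> (at t within {0..1}))
           has_integral (\<Sum>k<N. G k (c (Suc k)) - G k (c k))) {0..1}"
proof -
  define t where "t = (\<lambda>k::nat. real k / real N)"
  have tk: "0 \<le> t k" "t k < t (Suc k)" "t (Suc k) \<le> 1" if "k < N" for k
    using that N by (auto simp: t_def divide_simps)
  have "\<gamma> 0 \<in> ball (c 0) R" using arc[of 0 0] N by auto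
  then have R: "R > 0" by (metis ball_eq_empty empty_iff not_less)
  have pieces: "((\<lambda>t. f (\<gamma> t) / V t * vector_derivative \<gamma> (at t within {0..1}))
          has_integral (\<Sum>k<N. G k (\<gamma> (t (Suc k))) - G k (\<gamma> (t k)))) {0..1}"
  proof (rule has_integral_uniform_partition[OF N])
    fix k assume k: "k < N"
    show "((\<lambda>t. f (\<gamma> t) / V t * vector_derivative \<gamma> (at t within {0..1}))
            has_integral G k (\<gamma> (t (Suc k))) - G k (\<gamma> (t k))) {real k / N .. real (Suc k) / N}"
      unfolding t_def
      by (rule has_integral_primitive_subpath[OF vp tk[OF k, unfolded t_def], where S="ball (c k) R"])
         (use G k arc in auto)
  qed
  txt \<open>Moving each base point from \<open>\<gamma> (t k)\<close> to the centre \<open>c k\<close> changes the sum by a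
    telescoping term, because neighbouring primitives differ by a constant on the overlap of
    their balls, and the last one agrees with the first one up to a constant.\<close>
  define E where "E = (\<lambda>k. G k (\<gamma> (t k)) - G k (c k))"
  have step: "G k (\<gamma> (t (Suc k))) - G k (\<gamma> (t k)) = (G k (c (Suc k)) - G k (c k)) + (E (Suc k) - E k)"
    if k: "k < N" for k
  proof -
    have "\<gamma> (t (Suc k)) \<in> ball (c (Suc k)) R"
    proof (cases "Suc k < N")
      case True then show ?thesis using arc[OF True, of "t (Suc k)"] tk[OF True] by (auto simp: t_def)
    next
      case False then have "Suc k = N" using k by auto
      then show ?thesis using arc[OF N, of 0] closed cN N by (auto simp: t_def)
    qed
    moreover have "\<gamma> (t (Suc k)) \<in> ball (c k) R" using arc[OF k, of "t (Suc k)"] tk[OF k] by (auto simp: t_def)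
    moreover have "(G (Suc k) has_field_derivative f u / h k u) (at u)"
      if "u \<in> ball (c k) R \<inter> ball (c (Suc k)) R" for u
      using G[of "Suc k" u] overlap[OF k that] k that by auto
    ultimately have "G k (\<gamma> (t (Suc k))) - G k (c (Suc k)) = G (Suc k) (\<gamma> (t (Suc k))) - G (Suc k) (c (Suc k))"
      using next_centre[OF k] R G[of k] k
      by (intro primitive_increments_eq[where S="ball (c k) R \<inter> ball (c (Suc k)) R"
            and F="\<lambda>u. f u / h k u"]) (auto simp: convex_Int)
    then show ?thesis unfolding E_def by (simp add: algebra_simps)
  qed
  have "G N (\<gamma> 1) - G N (c 0) = G 0 (\<gamma> 1) - G 0 (c 0)"
    using arc[OF N, of 0] closed R G[of N] G[of 0] cN hN
    by (intro primitive_increments_eq[where S="ball (c 0) R" and F="\<lambda>u. f u / h 0 u"]) auto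
  then have EN: "E N = E 0" unfolding E_def t_def using N cN closed by auto
  have "(\<Sum>k<N. G k (\<gamma> (t (Suc k))) - G k (\<gamma> (t k)))
        = (\<Sum>k<N. (G k (c (Suc k)) - G k (c k)) + (E (Suc k) - E k))"
    by (rule sum.cong[OF refl], rule step) simp
  also have "\<dots> = (\<Sum>k<N. G k (c (Suc k)) - G k (c k))"
    using EN by (simp add: sum.distrib sum_lessThan_telescope)
  finally show ?thesis using pieces by simp
qed

lemma has_integral_closed_path_branches:
  fixes \<gamma> V :: "real \<Rightarrow> complex" and c :: "nat \<Rightarrow> complex" and h :: "nat \<Rightarrow> complex \<Rightarrow> complex"
  assumes vp: "valid_path \<gamma>" and closed: "\<gamma> 1 = \<gamma> 0" and N: "N > 0"
    and hol: "\<And>k. k \<le> N \<Longrightarrow> (\<lambda>u. f u / h k u) holomorphic_on ball (c k) R"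
    and arc: "\<And>k s. k < N \<Longrightarrow> s \<in> {real k / N .. real (Suc k) / N} \<Longrightarrow>
                \<gamma> s \<in> ball (c k) R \<and> V s = h k (\<gamma> s)"
    and next_centre: "\<And>k. k < N \<Longrightarrow> c (Suc k) \<in> ball (c k) R"
    and overlap: "\<And>k u. k < N \<Longrightarrow> u \<in> ball (c k) R \<inter> ball (c (Suc k)) R \<Longrightarrow> h k u = h (Suc k) u"
    and cN: "c N = c 0" and hN: "h N = h 0"
  shows "((\<lambda>t. f (\<gamma> t) / V t * vector_derivative \<gamma> (at t within {0..1})) has_integral
           (\<Sum>k<N. contour_integral (linepath (c k) (c (Suc k))) (\<lambda>u. f u / h k u))) {0..1}"
proof -
  have "\<exists>G. \<forall>u \<in> ball (c k) R. (G has_field_derivative f u / h k u) (at u)" if "k \<le> N" for k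
    using holomorphic_convex_primitive'[OF convex_ball open_ball hol[OF that]]
    by (metis at_within_open open_ball)
  then obtain G where G: "\<And>k u. k \<le> N \<Longrightarrow> u \<in> ball (c k) R \<Longrightarrow> (G k has_field_derivative f u / h k u) (at u)"
    by metis
  have "contour_integral (linepath (c k) (c (Suc k))) (\<lambda>u. f u / h k u) = G k (c (Suc k)) - G k (c k)"
    if k: "k < N" for k
  proof -
    have "closed_segment (c k) (c (Suc k)) \<subseteq> ball (c k) R"
      using next_centre[OF k] by (intro closed_segment_subset) (auto intro: le_less_trans[OF zero_le_dist])
    then have "((\<lambda>u. f u / h k u) has_contour_integral G k (c (Suc k)) - G k (c k)) (linepath (c k) (c (Suc k)))"
      using contour_integral_primitive[of "ball (c k) R" "G k" "\<lambda>u. f u / h k u" "linepath (c k) (c (Suc k))"]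
        G[of k] k by (auto simp: has_field_derivative_at_within)
    then show ?thesis by (rule contour_integral_unique)
  qed
  then show ?thesis
    using has_integral_closed_path_primitives[OF vp closed N G arc next_centre overlap cN hN]
    by simp
qed

lemma uniform_partition_subset:
  assumes "k < N"
  shows "{real k / N .. real (Suc k) / N} \<subseteq> {0..1}"
  using assms by (auto simp: divide_simps intro: order_trans)

lemma continuous_on_bounded_away:
  fixes f :: "'a::topological_space \<Rightarrow> 'b::real_normed_vector"
  assumes "compact S" "continuous_on S f" "\<And>t. t \<in> S \<Longrightarrow> f t \<noteq> z"
  obtains \<delta> where "\<delta> > 0" "\<And>t. t \<in> S \<Longrightarrow> \<delta> \<le> norm (f t - z)"
proof (cases "S = {}")
  case False
  have "continuous_on S (\<lambda>t. norm (f t - z))" using assms(2) by (intro continuous_intros)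
  then obtain t0 where "t0 \<in> S" "\<And>t. t \<in> S \<Longrightarrow> norm (f t0 - z) \<le> norm (f t - z)"
    using continuous_attains_inf[OF assms(1) False] by blast
  then show ?thesis using that[of "norm (f t0 - z)"] assms(3) by auto
qed (use that[of 1] in auto)

lemma uniform_partition_small_oscillation:
  fixes \<gamma> :: "real \<Rightarrow> 'a::metric_space"
  assumes "continuous_on {0..1} \<gamma>" "\<epsilon> > 0"
  obtains N where "N > 0"
    "\<And>k s. k < N \<Longrightarrow> s \<in> {real k / N .. real (Suc k) / N} \<Longrightarrow> dist (\<gamma> s) (\<gamma> (real k / N)) < \<epsilon>"
proof -
  have "uniformly_continuous_on {0..1} \<gamma>"
    using assms(1) by (rule compact_uniformly_continuous) simp
  then obtain d where d: "d > 0"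
    "\<And>s t. s \<in> {0..1} \<Longrightarrow> t \<in> {0..1} \<Longrightarrow> dist s t < d \<Longrightarrow> dist (\<gamma> s) (\<gamma> t) < \<epsilon>"
    unfolding uniformly_continuous_on_def using assms(2) by metis
  obtain N :: nat where N: "1 / d < real N" using reals_Archimedean2 by blast
  then have N0: "N > 0" using d by (auto intro: ccontr)
  have "1 / real N < d" using N d N0 by (simp add: divide_simps mult.commute)
  moreover have "dist s (real k / N) \<le> 1 / N" if "s \<in> {real k / N .. real (Suc k) / N}" for k s
    using that by (auto simp: dist_real_def add_divide_distrib)
  ultimately have "dist s (real k / N) < d" if "s \<in> {real k / N .. real (Suc k) / N}" for k s
    using that by fastforce
  moreover have "real k / N \<in> {0..1}" if "k < N" for k
    using that by (simp add: divide_simps)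
  ultimately show ?thesis
    using that[OF N0] d(2) uniform_partition_subset[of _ N] by blast
qed

lemma continuous_on_uniformly_close:
  fixes g :: "'a::heine_borel \<Rightarrow> real \<Rightarrow> 'b::metric_space"
  assumes "open U" "x0 \<in> U" "continuous_on (U \<times> {0..1}) (\<lambda>(x, t). g x t)" "\<epsilon> > 0"
  obtains r where "r > 0" "ball x0 r \<subseteq> U"
    "\<And>x t. x \<in> ball x0 r \<Longrightarrow> t \<in> {0..1::real} \<Longrightarrow> dist (g x t) (g x0 t) < \<epsilon>"
proof -
  obtain r0 where r0: "r0 > 0" "cball x0 r0 \<subseteq> U" using assms(1,2) open_contains_cball by blast
  have "uniformly_continuous_on (cball x0 r0 \<times> {0..1}) (\<lambda>(x, t). g x t)"
    using r0 by (intro compact_uniformly_continuous continuous_on_subset[OF assms(3)] compact_Times) auto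
  then obtain d where d: "d > 0" "\<And>p q. p \<in> cball x0 r0 \<times> {0..1::real} \<Longrightarrow> q \<in> cball x0 r0 \<times> {0..1} \<Longrightarrow>
        dist p q < d \<Longrightarrow> dist ((\<lambda>(x, t). g x t) p) ((\<lambda>(x, t). g x t) q) < \<epsilon>"
    unfolding uniformly_continuous_on_def using assms(4) by metis
  show ?thesis
  proof (rule that[of "min r0 d"])
    fix x and t :: real assume "x \<in> ball x0 (min r0 d)" "t \<in> {0..1}"
    then show "dist (g x t) (g x0 t) < \<epsilon>"
      using d(2)[of "(x, t)" "(x0, t)"] r0 by (auto simp: dist_Pair_Pair dist_commute)
  qed (use r0 d in auto)
qed

section \<open>A holomorphic branch of the square root\<close>

lemma continuous_on_csqrt_compose:
  assumes "continuous_on S f" "\<And>x. x \<in> S \<Longrightarrow> f x \<notin> \<real>\<^sub>\<le>\<^sub>0"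
  shows "continuous_on S (\<lambda>x. csqrt (f x))"
  by (rule continuous_on_compose2[OF continuous_on_csqrt assms(1)]) (use assms(2) in auto)

text \<open>The branch of \<open>\<surd>(u (u - 1) (u - x))\<close> taking the value \<open>A\<close> at \<open>u = c\<close>, \<open>x = x0\<close>
  (where \<open>A\<^sup>2 = c (c - 1) (c - x0)\<close>); it is holomorphic in \<open>u\<close> and \<open>x\<close> as long as the three
  quotients stay off the cut of the principal square root.\<close>

definition sqrt_cubic_branch :: "complex \<Rightarrow> complex \<Rightarrow> complex \<Rightarrow> complex \<Rightarrow> complex \<Rightarrow> complex" where
  "sqrt_cubic_branch c A x0 x u = A * csqrt (u / c) * csqrt ((u - 1) / (c - 1)) * csqrt ((u - x) / (c - x0))"

lemma sqrt_cubic_branch_squared: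
  assumes "A\<^sup>2 = c * (c - 1) * (c - x0)" "c \<noteq> 0" "c \<noteq> 1" "c \<noteq> x0"
  shows "(sqrt_cubic_branch c A x0 x u)\<^sup>2 = u * (u - 1) * (u - x)"
proof -
  have "(sqrt_cubic_branch c A x0 x u)\<^sup>2 = A\<^sup>2 * (u / c) * ((u - 1) / (c - 1)) * ((u - x) / (c - x0))"
    unfolding sqrt_cubic_branch_def by (simp add: power_mult_distrib)
  also have "\<dots> = (c * (u / c)) * ((c - 1) * ((u - 1) / (c - 1))) * ((c - x0) * ((u - x) / (c - x0)))"
    using assms(1) by (simp only: ac_simps)
  also have "\<dots> = u * (u - 1) * (u - x)"
    using assms(2-4) by simp
  finally show ?thesis .
qed

lemma sqrt_cubic_branch_nonzero:
  "A \<noteq> 0 \<Longrightarrow> u \<noteq> 0 \<Longrightarrow> u \<noteq> 1 \<Longrightarrow> u \<noteq> x \<Longrightarrow> c \<noteq> 0 \<Longrightarrow> c \<noteq> 1 \<Longrightarrow> c \<noteq> x0 \<Longrightarrow>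
    sqrt_cubic_branch c A x0 x u \<noteq> 0"
  unfolding sqrt_cubic_branch_def by auto

lemma sqrt_cubic_branch_centre:
  "c \<noteq> 0 \<Longrightarrow> c \<noteq> 1 \<Longrightarrow> c \<noteq> x0 \<Longrightarrow> sqrt_cubic_branch c A x0 x0 c = A"
  unfolding sqrt_cubic_branch_def by simp

lemma continuous_on_sqrt_cubic_branch:
  assumes "continuous_on S X" "continuous_on S W"
    and "\<And>p. p \<in> S \<Longrightarrow> W p / c \<notin> \<real>\<^sub>\<le>\<^sub>0 \<and> (W p - 1) / (c - 1) \<notin> \<real>\<^sub>\<le>\<^sub>0 \<and> (W p - X p) / (c - x0) \<notin> \<real>\<^sub>\<le>\<^sub>0"
  shows "continuous_on S (\<lambda>p. sqrt_cubic_branch c A x0 (X p) (W p))"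
  unfolding sqrt_cubic_branch_def
  using assms by (intro continuous_intros continuous_on_csqrt_compose) auto

lemma has_field_derivative_sqrt_cubic_branch:
  assumes r1: "u / c \<notin> \<real>\<^sub>\<le>\<^sub>0" and r2: "(u - 1) / (c - 1) \<notin> \<real>\<^sub>\<le>\<^sub>0" and r3: "(u - x) / (c - x0) \<notin> \<real>\<^sub>\<le>\<^sub>0"
  shows "(sqrt_cubic_branch c A x0 x has_field_derivative
           sqrt_cubic_branch c A x0 x u * (1 / (2 * u) + 1 / (2 * (u - 1)) + 1 / (2 * (u - x)))) (at u)"
proof -
  have nz: "u / c \<noteq> 0" "(u - 1) / (c - 1) \<noteq> 0" "(u - x) / (c - x0) \<noteq> 0" using r1 r2 r3 by auto
  then have nz': "u \<noteq> 0" "c \<noteq> 0" "u - 1 \<noteq> 0" "c - 1 \<noteq> 0" "u - x \<noteq> 0" "c - x0 \<noteq> 0" by auto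
  define s1 where "s1 = csqrt (u / c)"
  define s2 where "s2 = csqrt ((u - 1) / (c - 1))"
  define s3 where "s3 = csqrt ((u - x) / (c - x0))"
  have s: "s1\<^sup>2 = u / c" "s2\<^sup>2 = (u - 1) / (c - 1)" "s3\<^sup>2 = (u - x) / (c - x0)" "s1 \<noteq> 0" "s2 \<noteq> 0" "s3 \<noteq> 0"
    unfolding s1_def s2_def s3_def using nz by auto
  have d: "(sqrt_cubic_branch c A x0 x has_field_derivative
      A * ((1/c) / (2 * s1)) * s2 * s3 + A * s1 * ((1/(c-1)) / (2 * s2)) * s3
        + A * s1 * s2 * ((1/(c-x0)) / (2 * s3))) (at u)"
  proof -
    have q: "((\<lambda>u. u / c) has_field_derivative 1 / c) (at u)"
        "((\<lambda>u. (u - 1) / (c - 1)) has_field_derivative 1 / (c - 1)) (at u)"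
        "((\<lambda>u. (u - x) / (c - x0)) has_field_derivative 1 / (c - x0)) (at u)"
      using nz' by (auto intro!: derivative_eq_intros)
    show ?thesis
      using DERIV_mult[OF DERIV_mult[OF DERIV_cmult[OF has_field_derivative_csqrt'[OF q(1) r1], of A]
            has_field_derivative_csqrt'[OF q(2) r2]] has_field_derivative_csqrt'[OF q(3) r3]]
      unfolding sqrt_cubic_branch_def[abs_def] s1_def s2_def s3_def by (simp add: algebra_simps)
  qed
  have e1: "(1/c) / (2 * s1) = s1 * (1 / (2 * u))"
    using s(1,4) nz'(1,2) by (simp add: field_simps power2_eq_square)
  have e2: "(1/(c-1)) / (2 * s2) = s2 * (1 / (2 * (u - 1)))"
    using s(2,5) nz'(3,4) by (simp add: field_simps power2_eq_square) algebra
  have e3: "(1/(c-x0)) / (2 * s3) = s3 * (1 / (2 * (u - x)))"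
    using s(3,6) nz'(5,6) by (simp add: field_simps power2_eq_square) algebra
  show ?thesis
    using d unfolding e1 e2 e3 sqrt_cubic_branch_def s1_def[symmetric] s2_def[symmetric] s3_def[symmetric]
    by (simp add: algebra_simps)
qed

lemma has_field_derivative_sqrt_cubic_branch_param:
  assumes r3: "(u - x) / (c - x0) \<notin> \<real>\<^sub>\<le>\<^sub>0"
  shows "((\<lambda>x. sqrt_cubic_branch c A x0 x u) has_field_derivative
           - sqrt_cubic_branch c A x0 x u / (2 * (u - x))) (at x)"
proof -
  have nz: "(u - x) / (c - x0) \<noteq> 0" using r3 by auto
  define s3 where "s3 = csqrt ((u - x) / (c - x0))"
  have s3: "s3\<^sup>2 = (u - x) / (c - x0)" "s3 \<noteq> 0" unfolding s3_def using nz by auto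
  have d: "((\<lambda>x. sqrt_cubic_branch c A x0 x u) has_field_derivative
      A * csqrt (u / c) * csqrt ((u - 1) / (c - 1)) * ((- 1 / (c - x0)) / (2 * s3))) (at x)"
  proof -
    have "((\<lambda>x. (u - x) / (c - x0)) has_field_derivative - 1 / (c - x0)) (at x)"
      by (rule DERIV_cdivide) (auto intro!: derivative_eq_intros)
    from DERIV_cmult[OF has_field_derivative_csqrt'[OF this r3], of "A * csqrt (u / c) * csqrt ((u - 1) / (c - 1))"]
    show ?thesis unfolding sqrt_cubic_branch_def s3_def by (simp add: algebra_simps)
  qed
  have e: "(- 1 / (c - x0)) / (2 * s3) = - s3 / (2 * (u - x))"
    using s3 nz by (simp add: field_simps power2_eq_square) algebra
  show ?thesis using d unfolding e sqrt_cubic_branch_def s3_def[symmetric]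
    by (simp add: algebra_simps)
qed

lemma has_field_derivative_inverse_sqrt_cubic_branch:
  assumes "u / c \<notin> \<real>\<^sub>\<le>\<^sub>0" "(u - 1) / (c - 1) \<notin> \<real>\<^sub>\<le>\<^sub>0" "(u - x) / (c - x0) \<notin> \<real>\<^sub>\<le>\<^sub>0"
    and nz: "sqrt_cubic_branch c A x0 x u \<noteq> 0"
  shows "((\<lambda>u. -2 * inverse (sqrt_cubic_branch c A x0 x u)) has_field_derivative
           (1/u + 1/(u - 1) + 1/(u - x)) / sqrt_cubic_branch c A x0 x u) (at u)"
proof -
  let ?v = "sqrt_cubic_branch c A x0 x u"
  let ?S = "1/u + 1/(u - 1) + 1/(u - x)"
  have half: "1 / (2 * u) + 1 / (2 * (u - 1)) + 1 / (2 * (u - x)) = ?S / 2"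
    by (simp add: add_divide_distrib divide_divide_eq_left mult.commute)
  have "-2 * (- (v * (S / 2) * inverse (v ^ Suc (Suc 0)))) = S / v" if "v \<noteq> 0" for v S :: complex
    using that by (simp add: field_simps power2_eq_square)
  then show ?thesis
    using DERIV_cmult[OF DERIV_inverse_fun[OF has_field_derivative_sqrt_cubic_branch[OF assms(1-3)] nz], of "-2"]
    unfolding half using nz by (metis (no_types, lifting) DERIV_cong)
qed

lemma has_field_derivative_inverse_sqrt_cubic_branch_param:
  assumes "(u - x) / (c - x0) \<notin> \<real>\<^sub>\<le>\<^sub>0" and nz: "sqrt_cubic_branch c A x0 x u \<noteq> 0"
  shows "((\<lambda>x. a / sqrt_cubic_branch c A x0 x u) has_field_derivative
           a / (2 * (u - x)) / sqrt_cubic_branch c A x0 x u) (at x)"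
proof -
  have "u - x \<noteq> 0" using assms(1) by auto
  then have "a * (- ((- v / (2 * (u - x))) * inverse (v ^ Suc (Suc 0)))) = a / (2 * (u - x)) / v"
    if "v \<noteq> 0" for v
    using that by (simp add: field_simps power2_eq_square)
  then have "((\<lambda>x. a * inverse (sqrt_cubic_branch c A x0 x u)) has_field_derivative
           a / (2 * (u - x)) / sqrt_cubic_branch c A x0 x u) (at x)"
    using DERIV_cmult[OF DERIV_inverse_fun[OF has_field_derivative_sqrt_cubic_branch_param[OF assms(1)] nz], of a] nz
    by (metis (no_types, lifting) DERIV_cong)
  then show ?thesis by (simp only: divide_inverse)
qed

section \<open>Chains of branches\<close>

text \<open>For \<open>|x - x0| < \<rho>\<close>
  the branch attached to \<open>c k\<close> is then holomorphic and nonzero on the ball of radius \<open>3\<rho>\<close> around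
  \<open>c k\<close>, which contains the chord to the next centre.\<close>

definition branch_chain :: "(nat \<Rightarrow> complex) \<Rightarrow> (nat \<Rightarrow> complex) \<Rightarrow> complex \<Rightarrow> nat \<Rightarrow> real \<Rightarrow> bool" where
  "branch_chain c A x0 N \<rho> \<longleftrightarrow> \<rho> > 0 \<and>
     (\<forall>k\<le>N. 4*\<rho> < norm (c k) \<and> 4*\<rho> < norm (c k - 1) \<and> 4*\<rho> < norm (c k - x0) \<and>
        (A k)^2 = c k * (c k - 1) * (c k - x0)) \<and>
     (\<forall>k<N. norm (c (Suc k) - c k) < \<rho>)"

lemma branch_chain_regular:
  assumes chain: "branch_chain c A x0 N \<rho>" and k: "k \<le> N" and u: "u \<in> ball (c k) (3*\<rho>)" and x: "dist x x0 < \<rho>"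
  shows "u / c k \<notin> \<real>\<^sub>\<le>\<^sub>0" "(u - 1) / (c k - 1) \<notin> \<real>\<^sub>\<le>\<^sub>0" "(u - x) / (c k - x0) \<notin> \<real>\<^sub>\<le>\<^sub>0"
    "u \<noteq> 0" "u \<noteq> 1" "u \<noteq> x" "c k \<noteq> 0" "c k \<noteq> 1" "c k \<noteq> x0" "A k \<noteq> 0"
proof -
  have r: "\<rho> > 0" and ck: "4*\<rho> < norm (c k)" "4*\<rho> < norm (c k - 1)" "4*\<rho> < norm (c k - x0)"
    and Ak: "(A k)^2 = c k * (c k - 1) * (c k - x0)"
    using chain k unfolding branch_chain_def by auto
  have uc: "norm (u - c k) < 3*\<rho>" using u by (simp add: dist_norm norm_minus_commute)
  have xx: "norm (x - x0) < \<rho>" using x by (simp add: dist_norm)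
  have 1: "norm (u - c k) < norm (c k)" using uc ck r by linarith
  have 2: "norm ((u - 1) - (c k - 1)) < norm (c k - 1)" using uc ck r by simp
  have e: "(u - x) - (c k - x0) = (u - c k) + (x0 - x)" by simp
  have "norm ((u - x) - (c k - x0)) \<le> norm (u - c k) + norm (x0 - x)"
    unfolding e by (rule norm_triangle_ineq)
  then have "norm ((u - x) - (c k - x0)) \<le> norm (u - c k) + norm (x - x0)"
    by (simp add: norm_minus_commute)
  then have 3: "norm ((u - x) - (c k - x0)) < norm (c k - x0)" using uc xx ck by linarith
  show "u / c k \<notin> \<real>\<^sub>\<le>\<^sub>0" by (rule divide_notin_nonpos_Reals[OF 1])
  show "(u - 1) / (c k - 1) \<notin> \<real>\<^sub>\<le>\<^sub>0" by (rule divide_notin_nonpos_Reals[OF 2])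
  show "(u - x) / (c k - x0) \<notin> \<real>\<^sub>\<le>\<^sub>0" by (rule divide_notin_nonpos_Reals[OF 3])
  show "u \<noteq> 0" using 1 by auto
  show "u \<noteq> 1" using 2 by (auto simp: norm_minus_commute)
  show "u \<noteq> x" using 3 by (auto simp: norm_minus_commute)
  show "c k \<noteq> 0" "c k \<noteq> 1" "c k \<noteq> x0" using ck r by auto
  then show "A k \<noteq> 0" using Ak by auto
qed

lemma branch_chain_segment:
  assumes chain: "branch_chain c A x0 N \<rho>" and k: "k < N"
  shows "closed_segment (c k) (c (Suc k)) \<subseteq> ball (c k) (3*\<rho>)"
proof -
  have "norm (c (Suc k) - c k) < \<rho>" "\<rho> > 0" using chain k unfolding branch_chain_def by auto
  then have "c (Suc k) \<in> ball (c k) (3*\<rho>)" by (simp add: dist_norm norm_minus_commute)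
  moreover have "c k \<in> ball (c k) (3*\<rho>)" using \<open>\<rho> > 0\<close> by simp
  ultimately show ?thesis by (intro closed_segment_subset) auto
qed

lemma has_field_derivative_chain_branch:
  assumes chain: "branch_chain c A x0 N \<rho>" and k: "k \<le> N" and u: "u \<in> ball (c k) (3*\<rho>)" and x: "dist x x0 < \<rho>"
  shows "(sqrt_cubic_branch (c k) (A k) x0 x has_field_derivative
           sqrt_cubic_branch (c k) (A k) x0 x u * (1 / (2 * u) + 1 / (2 * (u - 1)) + 1 / (2 * (u - x)))) (at u)"
  using has_field_derivative_sqrt_cubic_branch branch_chain_regular[OF assms] by blast

lemma continuous_on_chain_branch:
  assumes chain: "branch_chain c A x0 N \<rho>" and k: "k \<le> N" and x: "dist x x0 < \<rho>"
  shows "continuous_on (ball (c k) (3*\<rho>)) (sqrt_cubic_branch (c k) (A k) x0 x)"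
proof (rule continuous_at_imp_continuous_on, rule ballI)
  fix u assume "u \<in> ball (c k) (3*\<rho>)"
  from has_field_derivative_chain_branch[OF chain k this x]
  show "isCont (sqrt_cubic_branch (c k) (A k) x0 x) u" by (rule DERIV_isCont)
qed

lemma chain_branch_nonzero:
  assumes chain: "branch_chain c A x0 N \<rho>" and k: "k \<le> N" and u: "u \<in> ball (c k) (3*\<rho>)" and x: "dist x x0 < \<rho>"
  shows "sqrt_cubic_branch (c k) (A k) x0 x u \<noteq> 0"
  using sqrt_cubic_branch_nonzero branch_chain_regular[OF assms] by blast

definition chain_period :: "(nat \<Rightarrow> complex) \<Rightarrow> (nat \<Rightarrow> complex) \<Rightarrow> complex \<Rightarrow> nat \<Rightarrow> (complex \<Rightarrow> complex) \<Rightarrow> complex \<Rightarrow> complex" where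
  "chain_period c A x0 N F x =
     (\<Sum>k<N. contour_integral (linepath (c k) (c (Suc k))) (\<lambda>u. F u / sqrt_cubic_branch (c k) (A k) x0 x u))"

lemma chain_integrand_integrable:
  assumes chain: "branch_chain c A x0 N \<rho>" and k: "k < N" and x: "dist x x0 < \<rho>"
    and F: "continuous_on (ball (c k) (3*\<rho>)) F"
  shows "(\<lambda>u. F u / sqrt_cubic_branch (c k) (A k) x0 x u) contour_integrable_on linepath (c k) (c (Suc k))"
proof (rule contour_integrable_continuous_linepath)
  have "continuous_on (ball (c k) (3*\<rho>)) (\<lambda>u. F u / sqrt_cubic_branch (c k) (A k) x0 x u)"
    using F continuous_on_chain_branch[OF chain _ x, of k] chain_branch_nonzero[OF chain _ _ x, of k] k
    by (intro continuous_intros) auto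
  then show "continuous_on (closed_segment (c k) (c (Suc k))) (\<lambda>u. F u / sqrt_cubic_branch (c k) (A k) x0 x u)"
    using branch_chain_segment[OF chain k] continuous_on_subset by blast
qed

lemma chain_period_linear:
  assumes chain: "branch_chain c A x0 N \<rho>" and x: "dist x x0 < \<rho>"
    and F: "\<And>k. k \<le> N \<Longrightarrow> continuous_on (ball (c k) (3*\<rho>)) F"
    and G: "\<And>k. k \<le> N \<Longrightarrow> continuous_on (ball (c k) (3*\<rho>)) G"
    and H: "\<And>k. k \<le> N \<Longrightarrow> continuous_on (ball (c k) (3*\<rho>)) H"
    and eq: "\<And>k u. k \<le> N \<Longrightarrow> u \<in> ball (c k) (3*\<rho>) \<Longrightarrow> K u = a * F u + b * G u + d * H u"
  shows "chain_period c A x0 N K x = a * chain_period c A x0 N F x + b * chain_period c A x0 N G x + d * chain_period c A x0 N H x"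
proof -
  have "contour_integral (linepath (c k) (c (Suc k))) (\<lambda>u. K u / sqrt_cubic_branch (c k) (A k) x0 x u)
     = a * contour_integral (linepath (c k) (c (Suc k))) (\<lambda>u. F u / sqrt_cubic_branch (c k) (A k) x0 x u)
     + b * contour_integral (linepath (c k) (c (Suc k))) (\<lambda>u. G u / sqrt_cubic_branch (c k) (A k) x0 x u)
     + d * contour_integral (linepath (c k) (c (Suc k))) (\<lambda>u. H u / sqrt_cubic_branch (c k) (A k) x0 x u)" if k: "k < N" for k
  proof -
    let ?g = "linepath (c k) (c (Suc k))"
    let ?b = "sqrt_cubic_branch (c k) (A k) x0 x"
    have iF: "(\<lambda>u. F u / ?b u) contour_integrable_on ?g" using chain_integrand_integrable[OF chain k x F] k by auto
    have iG: "(\<lambda>u. G u / ?b u) contour_integrable_on ?g" using chain_integrand_integrable[OF chain k x G] k by auto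
    have iH: "(\<lambda>u. H u / ?b u) contour_integrable_on ?g" using chain_integrand_integrable[OF chain k x H] k by auto
    have "contour_integral ?g (\<lambda>u. K u / ?b u) = contour_integral ?g (\<lambda>u. a * (F u / ?b u) + b * (G u / ?b u) + d * (H u / ?b u))"
    proof (rule contour_integral_eq)
      fix u assume "u \<in> path_image ?g"
      then have "u \<in> ball (c k) (3*\<rho>)" using branch_chain_segment[OF chain k] by auto
      then have "K u = a * F u + b * G u + d * H u" using eq[of k u] k by auto
      then show "K u / ?b u = a * (F u / ?b u) + b * (G u / ?b u) + d * (H u / ?b u)"
        by (simp add: add_divide_distrib)
    qed
    also have "\<dots> = a * contour_integral ?g (\<lambda>u. F u / ?b u) + b * contour_integral ?g (\<lambda>u. G u / ?b u) + d * contour_integral ?g (\<lambda>u. H u / ?b u)"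
      by (intro contour_integral_unique has_contour_integral_add has_contour_integral_lmul has_contour_integral_integral iF iG iH)
    finally show ?thesis .
  qed
  then show ?thesis unfolding chain_period_def
    by (simp add: sum.distrib sum_distrib_left)
qed

lemma chain_period_exact:
  assumes chain: "branch_chain c A x0 N \<rho>" and x: "dist x x0 < \<rho>" and cN: "c N = c 0" and AN: "A N = A 0"
    and agree: "\<And>k. k < N \<Longrightarrow> sqrt_cubic_branch (c k) (A k) x0 x (c (Suc k))
                                = sqrt_cubic_branch (c (Suc k)) (A (Suc k)) x0 x (c (Suc k))"
  shows "chain_period c A x0 N (\<lambda>u. 1/u + 1/(u - 1) + 1/(u - x)) x = 0"
proof -
  define w where "w = (\<lambda>k. -2 * inverse (sqrt_cubic_branch (c k) (A k) x0 x (c k)))"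
  have "contour_integral (linepath (c k) (c (Suc k)))
          (\<lambda>u. (1/u + 1/(u - 1) + 1/(u - x)) / sqrt_cubic_branch (c k) (A k) x0 x u) = w (Suc k) - w k"
    if k: "k < N" for k
  proof -
    let ?b = "sqrt_cubic_branch (c k) (A k) x0 x"
    have der: "((\<lambda>u. -2 * inverse (?b u)) has_field_derivative (1/u + 1/(u - 1) + 1/(u - x)) / ?b u)
            (at u within ball (c k) (3*\<rho>))" if u: "u \<in> ball (c k) (3*\<rho>)" for u
      using k branch_chain_regular(1-3)[OF chain _ u x] chain_branch_nonzero[OF chain _ u x]
      by (intro has_field_derivative_at_within[OF has_field_derivative_inverse_sqrt_cubic_branch]) auto
    have "((\<lambda>u. (1/u + 1/(u - 1) + 1/(u - x)) / ?b u) has_contour_integral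
            -2 * inverse (?b (c (Suc k))) - -2 * inverse (?b (c k))) (linepath (c k) (c (Suc k)))"
      using contour_integral_primitive[of "ball (c k) (3*\<rho>)" "\<lambda>u. -2 * inverse (?b u)"
          "\<lambda>u. (1/u + 1/(u - 1) + 1/(u - x)) / ?b u" "linepath (c k) (c (Suc k))"]
        der branch_chain_segment[OF chain k] by simp
    then show ?thesis unfolding w_def using agree[OF k] by (simp add: contour_integral_unique)
  qed
  then have "chain_period c A x0 N (\<lambda>u. 1/u + 1/(u - 1) + 1/(u - x)) x = (\<Sum>k<N. w (Suc k) - w k)"
    unfolding chain_period_def by (intro sum.cong) auto
  also have "\<dots> = w N - w 0" by (rule sum_lessThan_telescope)
  also have "\<dots> = 0" using cN AN by (simp add: w_def)
  finally show ?thesis .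
qed

lemma continuous_on_chord_integrand:
  assumes chain: "branch_chain c A x0 N \<rho>" and k: "k < N" and F: "continuous_on (ball (c k) (3*\<rho>)) F"
  defines "l \<equiv> linepath (c k) (c (Suc k))"
  shows "continuous_on (ball x0 \<rho> \<times> cbox 0 1)
           (\<lambda>(x, s). F (l s) / (2 * (l s - x)) / sqrt_cubic_branch (c k) (A k) x0 x (l s) * (c (Suc k) - c k))"
proof -
  let ?W = "ball x0 \<rho> \<times> cbox (0::real) 1"
  have kN: "k \<le> N" using k by simp
  have l: "l s \<in> ball (c k) (3*\<rho>)" if "s \<in> cbox 0 1" for s
    using linepath_in_path[of s "c k" "c (Suc k)"] branch_chain_segment[OF chain k] that by (auto simp: l_def)
  have cl: "continuous_on ?W (\<lambda>p. l (snd p))"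
    unfolding l_def by (rule continuous_on_compose2[OF continuous_on_linepath]) (auto intro: continuous_intros)
  have reg: "l (snd p) / c k \<notin> \<real>\<^sub>\<le>\<^sub>0 \<and> (l (snd p) - 1) / (c k - 1) \<notin> \<real>\<^sub>\<le>\<^sub>0 \<and>
        (l (snd p) - fst p) / (c k - x0) \<notin> \<real>\<^sub>\<le>\<^sub>0 \<and> l (snd p) \<noteq> fst p \<and>
        sqrt_cubic_branch (c k) (A k) x0 (fst p) (l (snd p)) \<noteq> 0" if "p \<in> ?W" for p
    using branch_chain_regular[OF chain kN l, of "snd p" "fst p"] chain_branch_nonzero[OF chain kN l, of "snd p" "fst p"]
      that by (auto simp: mem_Times_iff dist_commute)
  have "continuous_on ?W (\<lambda>p. F (l (snd p)))"
    by (rule continuous_on_compose2[OF F cl]) (use l in \<open>auto simp: mem_Times_iff\<close>)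
  moreover have "continuous_on ?W (\<lambda>p. sqrt_cubic_branch (c k) (A k) x0 (fst p) (l (snd p)))"
    using reg by (intro continuous_on_sqrt_cubic_branch cl continuous_intros) auto
  ultimately have "continuous_on ?W (\<lambda>p. F (l (snd p)) / (2 * (l (snd p) - fst p))
                                      / sqrt_cubic_branch (c k) (A k) x0 (fst p) (l (snd p)) * (c (Suc k) - c k))"
    using reg by (intro continuous_intros cl) auto
  then show ?thesis unfolding case_prod_unfold .
qed

lemma has_field_derivative_chord_integral:
  assumes chain: "branch_chain c A x0 N \<rho>" and k: "k < N" and x1: "dist x1 x0 < \<rho>"
    and F: "continuous_on (ball (c k) (3*\<rho>)) F"
  shows "((\<lambda>x. contour_integral (linepath (c k) (c (Suc k))) (\<lambda>u. F u / sqrt_cubic_branch (c k) (A k) x0 x u))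
           has_field_derivative
           contour_integral (linepath (c k) (c (Suc k)))
             (\<lambda>u. F u / (2 * (u - x1)) / sqrt_cubic_branch (c k) (A k) x0 x1 u)) (at x1)"
proof -
  define U where "U = ball x0 \<rho>"
  define l where "l = linepath (c k) (c (Suc k))"
  define d where "d = c (Suc k) - c k"
  have x1U: "x1 \<in> U" using x1 by (simp add: U_def dist_commute)
  have xU: "dist x x0 < \<rho>" if "x \<in> U" for x using that by (simp add: U_def dist_commute)
  have kN: "k \<le> N" using k by simp
  have l: "l s \<in> ball (c k) (3*\<rho>)" if "s \<in> cbox 0 1" for s
    using linepath_in_path[of s "c k" "c (Suc k)"] branch_chain_segment[OF chain k] that by (auto simp: l_def)
  have cl: "continuous_on (cbox 0 1) l" unfolding l_def by (rule continuous_on_linepath)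
  have "((\<lambda>x. integral (cbox 0 1) (\<lambda>s. F (l s) / sqrt_cubic_branch (c k) (A k) x0 x (l s) * d))
         has_field_derivative
         integral (cbox 0 1) (\<lambda>s. F (l s) / (2 * (l s - x1)) / sqrt_cubic_branch (c k) (A k) x0 x1 (l s) * d))
        (at x1 within U)"
  proof (rule leibniz_rule_field_derivative
      [where fx="\<lambda>x s. F (l s) / (2 * (l s - x)) / sqrt_cubic_branch (c k) (A k) x0 x (l s) * d"])
    fix x s assume x: "x \<in> U" and s: "s \<in> cbox (0::real) 1"
    show "((\<lambda>x. F (l s) / sqrt_cubic_branch (c k) (A k) x0 x (l s) * d) has_field_derivative
             F (l s) / (2 * (l s - x)) / sqrt_cubic_branch (c k) (A k) x0 x (l s) * d) (at x within U)"
      using has_field_derivative_inverse_sqrt_cubic_branch_param[of "l s" x "c k" x0 "A k" "F (l s)",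
          OF branch_chain_regular(3)[OF chain kN l[OF s] xU[OF x]] chain_branch_nonzero[OF chain kN l[OF s] xU[OF x]]]
      by (intro has_field_derivative_at_within[OF DERIV_cmult_right])
  next
    fix x assume x: "x \<in> U"
    have "continuous_on (ball (c k) (3*\<rho>)) (\<lambda>u. F u / sqrt_cubic_branch (c k) (A k) x0 x u * d)"
      using F continuous_on_chain_branch[OF chain kN xU[OF x]] chain_branch_nonzero[OF chain kN _ xU[OF x]]
      by (intro continuous_intros) auto
    then have "continuous_on (cbox 0 1) (\<lambda>s. F (l s) / sqrt_cubic_branch (c k) (A k) x0 x (l s) * d)"
      using cl by (rule continuous_on_compose2) (use l in auto)
    then show "(\<lambda>s. F (l s) / sqrt_cubic_branch (c k) (A k) x0 x (l s) * d) integrable_on cbox 0 1"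
      by (rule integrable_continuous)
  next
    show "continuous_on (U \<times> cbox 0 1)
            (\<lambda>(x, s). F (l s) / (2 * (l s - x)) / sqrt_cubic_branch (c k) (A k) x0 x (l s) * d)"
      unfolding U_def l_def d_def by (rule continuous_on_chord_integrand[OF chain k F])
  qed (use x1U in \<open>auto simp: U_def\<close>)
  then show ?thesis
    using at_within_open[OF x1U] by (simp add: U_def l_def d_def contour_integral_integral)
qed

lemma has_field_derivative_chain_period:
  assumes chain: "branch_chain c A x0 N \<rho>" and x1: "dist x1 x0 < \<rho>"
    and F: "\<And>k. k \<le> N \<Longrightarrow> continuous_on (ball (c k) (3*\<rho>)) F"
  shows "(chain_period c A x0 N F has_field_derivative chain_period c A x0 N (\<lambda>u. F u / (2 * (u - x1))) x1) (at x1)"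
  unfolding chain_period_def[abs_def]
  using has_field_derivative_chord_integral[OF chain _ x1 F] by (intro DERIV_sum) auto

section \<open>Periods of a lifted cycle\<close>

lemma lifted_cycle_familyD:
  assumes "lifted_cycle_family U g v" "x \<in> U"
  shows "valid_path (g x)" "g x 1 = g x 0" "v x 1 = v x 0"
    "\<And>t. t \<in> {0..1} \<Longrightarrow> g x t \<noteq> 0 \<and> g x t \<noteq> 1 \<and> g x t \<noteq> x \<and> (v x t)\<^sup>2 = g x t * (g x t - 1) * (g x t - x)"
  using assms unfolding lifted_cycle_family_def pathfinish_def pathstart_def by auto

lemma lifted_cycle_family_continuous:
  assumes "lifted_cycle_family U g v"
  shows "continuous_on (U \<times> {0..1}) (\<lambda>(x, t). g x t)" "continuous_on (U \<times> {0..1}) (\<lambda>(x, t). v x t)"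
  using assms unfolding lifted_cycle_family_def by auto

locale subdivided_cycle =
  fixes U :: "complex set" and g v :: "complex \<Rightarrow> real \<Rightarrow> complex" and x0 :: complex
    and c A :: "nat \<Rightarrow> complex" and N :: nat and \<rho> r :: real
  assumes family: "lifted_cycle_family U g v" and x0: "x0 \<in> U"
    and chain: "branch_chain c A x0 N \<rho>"
    and centres: "c = (\<lambda>k. g x0 (real k / N))" and root_values: "A = (\<lambda>k. v x0 (real k / N))"
    and N: "N > 0" and r: "0 < r" "r \<le> \<rho>" "ball x0 r \<subseteq> U"
    and family_close: "\<And>x t. x \<in> ball x0 r \<Longrightarrow> t \<in> {0..1} \<Longrightarrow> norm (g x t - g x0 t) < \<rho>"
    and arc_short: "\<And>k s. k < N \<Longrightarrow> s \<in> {real k / N .. real (Suc k) / N} \<Longrightarrow> norm (g x0 s - c k) < \<rho>"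
begin

lemma dist_centre: "x \<in> ball x0 r \<Longrightarrow> dist x x0 < \<rho>"
  using r by (simp add: dist_commute)

lemma centre_in_ball: "x0 \<in> ball x0 r"
  using r by simp

lemma chain_closed: "c N = c 0" "A N = A 0"
  using lifted_cycle_familyD(2,3)[OF family x0] N centres root_values by auto

lemma arc_in_ball:
  assumes x: "x \<in> ball x0 r" and k: "k < N" and s: "s \<in> {real k / N .. real (Suc k) / N}"
  shows "g x s \<in> ball (c k) (3*\<rho>)"
proof -
  have "norm (g x s - c k) \<le> norm (g x s - g x0 s) + norm (g x0 s - c k)"
    by (metis diff_add_cancel norm_triangle_ineq add_diff_eq)
  also have "\<dots> < \<rho> + \<rho>"
    using family_close[OF x] uniform_partition_subset[OF k] s arc_short[OF k s] by (intro add_strict_mono) blast+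
  finally show ?thesis using chain unfolding branch_chain_def by (simp add: dist_norm norm_minus_commute)
qed

text \<open>On each arc the lift \<open>v\<close> is given by the branch attached to the arc's centre: both are
  continuous square roots of \<open>u (u - 1) (u - x)\<close> on the connected parameter set, and they agree at
  the centre itself.\<close>

lemma lift_eq_branch:
  assumes x: "x \<in> ball x0 r" and k: "k < N" and s: "s \<in> {real k / N .. real (Suc k) / N}"
  shows "v x s = sqrt_cubic_branch (c k) (A k) x0 x (g x s)"
proof -
  define S where "S = ball x0 r \<times> {real k / N .. real (Suc k) / N}"
  have SU: "S \<subseteq> U \<times> {0..1}" using r(3) uniform_partition_subset[OF k] unfolding S_def by blast
  have kN: "k \<le> N" using k by simp
  have inS: "g (fst p) (snd p) \<in> ball (c k) (3*\<rho>)" "dist (fst p) x0 < \<rho>" if "p \<in> S" for p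
    using that arc_in_ball[of "fst p" k "snd p"] dist_centre[of "fst p"] k unfolding S_def by auto
  have ck: "c k \<noteq> 0" "c k \<noteq> 1" "c k \<noteq> x0" "(A k)\<^sup>2 = c k * (c k - 1) * (c k - x0)"
    using chain kN unfolding branch_chain_def by auto
  have conn: "connected S" unfolding S_def by (intro convex_connected convex_Times convex_ball convex_real_interval)
  have cv: "continuous_on S (\<lambda>p. v (fst p) (snd p))"
    using continuous_on_subset[OF lifted_cycle_family_continuous(2)[OF family] SU] by (simp add: case_prod_unfold)
  have "continuous_on S (\<lambda>p. g (fst p) (snd p))"
    using continuous_on_subset[OF lifted_cycle_family_continuous(1)[OF family] SU] by (simp add: case_prod_unfold)
  then have cb: "continuous_on S (\<lambda>p. sqrt_cubic_branch (c k) (A k) x0 (fst p) (g (fst p) (snd p)))"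
    using branch_chain_regular(1-3)[OF chain kN inS] by (intro continuous_on_sqrt_cubic_branch continuous_intros) auto
  have sq: "(v (fst p) (snd p))\<^sup>2 = (sqrt_cubic_branch (c k) (A k) x0 (fst p) (g (fst p) (snd p)))\<^sup>2"
    if "p \<in> S" for p
    using that SU lifted_cycle_familyD(4)[OF family, of "fst p" "snd p"] sqrt_cubic_branch_squared[OF ck(4) ck(1-3)]
    by (auto simp: mem_Times_iff)
  have nz: "sqrt_cubic_branch (c k) (A k) x0 (fst p) (g (fst p) (snd p)) \<noteq> 0" if "p \<in> S" for p
    using chain_branch_nonzero[OF chain kN inS[OF that]] .
  have z0: "(x0, real k / N) \<in> S" and z: "(x, s) \<in> S"
    using r N k x s unfolding S_def by (auto simp: divide_simps)
  have "v x0 (real k / N) = sqrt_cubic_branch (c k) (A k) x0 x0 (g x0 (real k / N))"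
    using sqrt_cubic_branch_centre[OF ck(1-3), of "A k"] centres root_values by simp
  from continuous_sqrt_branches_eq[OF conn cv cb sq nz z0 _ z, simplified, OF this]
  show ?thesis .
qed

lemma branches_agree:
  assumes x: "x \<in> ball x0 r" and k: "k < N" and u: "u \<in> ball (c k) (3*\<rho>) \<inter> ball (c (Suc k)) (3*\<rho>)"
  shows "sqrt_cubic_branch (c k) (A k) x0 x u = sqrt_cubic_branch (c (Suc k)) (A (Suc k)) x0 x u"
proof -
  define z0 where "z0 = g x (real (Suc k) / N)"
  have sk: "real (Suc k) / N \<in> {real k / N .. real (Suc k) / N}"
    using N by (auto simp: divide_simps)
  have z0k: "z0 \<in> ball (c k) (3*\<rho>)" unfolding z0_def by (rule arc_in_ball[OF x k sk])
  have vk: "v x (real (Suc k) / N) = sqrt_cubic_branch (c k) (A k) x0 x z0"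
    unfolding z0_def by (rule lift_eq_branch[OF x k sk])
  have z0k1: "z0 \<in> ball (c (Suc k)) (3*\<rho>) \<and> v x (real (Suc k) / N) = sqrt_cubic_branch (c (Suc k)) (A (Suc k)) x0 x z0"
  proof (cases "Suc k < N")
    case True
    have "real (Suc k) / N \<in> {real (Suc k) / N .. real (Suc (Suc k)) / N}"
      using N by (auto simp: divide_simps)
    then show ?thesis unfolding z0_def using arc_in_ball[OF x True] lift_eq_branch[OF x True] by auto
  next
    case False
    then have kN: "Suc k = N" using k by auto
    have s0: "(0::real) \<in> {real 0 / N .. real (Suc 0) / N}" by simp
    have "g x 1 = g x 0" "v x 1 = v x 0" using lifted_cycle_familyD(2,3)[OF family] x r(3) by auto
    then show ?thesis
      unfolding z0_def using kN N arc_in_ball[OF x N s0] lift_eq_branch[OF x N s0] chain_closed by auto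
  qed
  define S where "S = ball (c k) (3*\<rho>) \<inter> ball (c (Suc k)) (3*\<rho>)"
  have kN: "k \<le> N" "Suc k \<le> N" using k by auto
  have ck: "c j \<noteq> 0" "c j \<noteq> 1" "c j \<noteq> x0" "(A j)\<^sup>2 = c j * (c j - 1) * (c j - x0)" if "j \<le> N" for j
    using chain that unfolding branch_chain_def by auto
  have "connected S" unfolding S_def by (intro convex_connected convex_Int convex_ball)
  moreover have "continuous_on S (sqrt_cubic_branch (c k) (A k) x0 x)"
    using continuous_on_chain_branch[OF chain kN(1) dist_centre[OF x]] unfolding S_def
    by (rule continuous_on_subset) auto
  moreover have "continuous_on S (sqrt_cubic_branch (c (Suc k)) (A (Suc k)) x0 x)"
    using continuous_on_chain_branch[OF chain kN(2) dist_centre[OF x]] unfolding S_def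
    by (rule continuous_on_subset) auto
  moreover have "(sqrt_cubic_branch (c k) (A k) x0 x w)\<^sup>2 = (sqrt_cubic_branch (c (Suc k)) (A (Suc k)) x0 x w)\<^sup>2" for w
    using sqrt_cubic_branch_squared[OF ck(4)[OF kN(1)] ck(1-3)[OF kN(1)]]
      sqrt_cubic_branch_squared[OF ck(4)[OF kN(2)] ck(1-3)[OF kN(2)]] by simp
  moreover have "sqrt_cubic_branch (c (Suc k)) (A (Suc k)) x0 x w \<noteq> 0" if "w \<in> S" for w
    using chain_branch_nonzero[OF chain kN(2) _ dist_centre[OF x]] that unfolding S_def by auto
  moreover have "z0 \<in> S" "u \<in> S" using z0k z0k1 u unfolding S_def by auto
  ultimately show ?thesis
    using continuous_sqrt_branches_eq[of S "sqrt_cubic_branch (c k) (A k) x0 x"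
        "sqrt_cubic_branch (c (Suc k)) (A (Suc k)) x0 x" z0 u] kN vk z0k1 by auto
qed

lemma period_eq_chain_period:
  assumes x: "x \<in> ball x0 r" and F: "\<And>k. k \<le> N \<Longrightarrow> F holomorphic_on ball (c k) (3*\<rho>)"
  shows "curve_period F (g x) (v x) = chain_period c A x0 N F x"
proof -
  have "((\<lambda>t. F (g x t) / v x t * vector_derivative (g x) (at t within {0..1})) has_integral
           chain_period c A x0 N F x) {0..1}"
    unfolding chain_period_def
  proof (rule has_integral_closed_path_branches[where h="\<lambda>k. sqrt_cubic_branch (c k) (A k) x0 x"])
    show "valid_path (g x)" "g x 1 = g x 0" using lifted_cycle_familyD(1,2)[OF family] x r(3) by auto
    show "(\<lambda>u. F u / sqrt_cubic_branch (c k) (A k) x0 x u) holomorphic_on ball (c k) (3 * \<rho>)" if k: "k \<le> N" for k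
    proof -
      have "sqrt_cubic_branch (c k) (A k) x0 x holomorphic_on ball (c k) (3*\<rho>)"
        unfolding holomorphic_on_open[OF open_ball]
        using has_field_derivative_chain_branch[OF chain k _ dist_centre[OF x]] by blast
      then show ?thesis
        using F[OF k] chain_branch_nonzero[OF chain k _ dist_centre[OF x]] by (intro holomorphic_intros) auto
    qed
    show "c (Suc k) \<in> ball (c k) (3 * \<rho>)" if "k < N" for k
      using chain that unfolding branch_chain_def by (auto simp: dist_norm norm_minus_commute)
  qed (use N arc_in_ball[OF x] lift_eq_branch[OF x] branches_agree[OF x] chain_closed in auto)
  then show ?thesis unfolding curve_period_def by (rule integral_unique)
qed

lemma chain_period_exact_centre: "chain_period c A x0 N (\<lambda>u. 1/u + 1/(u - 1) + 1/(u - x0)) x0 = 0"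
proof (rule chain_period_exact[OF chain _ chain_closed])
  show "dist x0 x0 < \<rho>" using r by simp
  fix k assume k: "k < N"
  have "c (Suc k) \<in> ball (c k) (3 * \<rho>) \<inter> ball (c (Suc k)) (3 * \<rho>)"
    using chain k unfolding branch_chain_def by (auto simp: dist_norm norm_minus_commute)
  then show "sqrt_cubic_branch (c k) (A k) x0 x0 (c (Suc k)) = sqrt_cubic_branch (c (Suc k)) (A (Suc k)) x0 x0 (c (Suc k))"
    by (rule branches_agree[OF centre_in_ball k])
qed

lemma ball_avoids_branch_points:
  assumes "k \<le> N" "u \<in> ball (c k) (3*\<rho>)"
  shows "u \<noteq> 0" "u - 1 \<noteq> 0" "u - x0 \<noteq> 0"
  using branch_chain_regular(4-6)[OF chain assms, of x0] r by auto

lemma continuous_on_period_integrands: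
  assumes "k \<le> N"
  shows "continuous_on (ball (c k) (3*\<rho>)) (\<lambda>u. 1 / u)"
    "continuous_on (ball (c k) (3*\<rho>)) (\<lambda>u. 1 / (u - 1))"
    "continuous_on (ball (c k) (3*\<rho>)) (\<lambda>u. 1/u + 1/(u - 1) + 1/(u - x0))"
  by (intro continuous_intros; use ball_avoids_branch_points[OF assms] in blast)+

text \<open>Differentiating a chain period in \<open>x\<close> multiplies the integrand by \<open>1 / (2 (u - x0))\<close>;
  partial fractions reduce the result to the two periods and the exact form, whose period vanishes.\<close>

lemma chain_period_partial_fractions:
  assumes x0_nz: "x0 \<noteq> 0" "x0 \<noteq> 1"
  defines "P \<equiv> chain_period c A x0 N"
  shows "P (\<lambda>u. 1 / u / (2 * (u - x0))) x0 = (-2 * P (\<lambda>u. 1 / u) x0 - P (\<lambda>u. 1 / (u - 1)) x0) / (2 * x0)"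
    and "P (\<lambda>u. 1 / (u - 1) / (2 * (u - x0))) x0 = (P (\<lambda>u. 1 / u) x0 + 2 * P (\<lambda>u. 1 / (u - 1)) x0) / (2 * (1 - x0))"
proof -
  have dx0: "dist x0 x0 < \<rho>" using r by simp
  have exact: "P (\<lambda>u. 1/u + 1/(u - 1) + 1/(u - x0)) x0 = 0"
    unfolding P_def by (rule chain_period_exact_centre)
  have "P (\<lambda>u. 1 / u / (2 * (u - x0))) x0
      = (- 1 / x0) * P (\<lambda>u. 1 / u) x0 + (- 1 / (2 * x0)) * P (\<lambda>u. 1 / (u - 1)) x0
        + (1 / (2 * x0)) * P (\<lambda>u. 1/u + 1/(u - 1) + 1/(u - x0)) x0"
    unfolding P_def
  proof (rule chain_period_linear[OF chain dx0 continuous_on_period_integrands])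
    fix k u assume "k \<le> N" "u \<in> ball (c k) (3*\<rho>)"
    with ball_avoids_branch_points[of k u] x0_nz
    show "1 / u / (2 * (u - x0)) = - 1 / x0 * (1 / u) + - 1 / (2 * x0) * (1 / (u - 1))
        + 1 / (2 * x0) * (1 / u + 1 / (u - 1) + 1 / (u - x0))"
      by (simp add: divide_simps) (simp add: algebra_simps)
  qed
  also have "\<dots> = (-2 * P (\<lambda>u. 1 / u) x0 - P (\<lambda>u. 1 / (u - 1)) x0) / (2 * x0)"
    unfolding exact using x0_nz by (simp add: field_simps)
  finally show "P (\<lambda>u. 1 / u / (2 * (u - x0))) x0 = (-2 * P (\<lambda>u. 1 / u) x0 - P (\<lambda>u. 1 / (u - 1)) x0) / (2 * x0)" .
  have "P (\<lambda>u. 1 / (u - 1) / (2 * (u - x0))) x0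
      = (1 / (2 * (1 - x0))) * P (\<lambda>u. 1 / u) x0 + (1 / (1 - x0)) * P (\<lambda>u. 1 / (u - 1)) x0
        + (- 1 / (2 * (1 - x0))) * P (\<lambda>u. 1/u + 1/(u - 1) + 1/(u - x0)) x0"
    unfolding P_def
  proof (rule chain_period_linear[OF chain dx0 continuous_on_period_integrands])
    fix k u assume "k \<le> N" "u \<in> ball (c k) (3*\<rho>)"
    moreover have "1 - x0 \<noteq> 0" using x0_nz by auto
    ultimately show "1 / (u - 1) / (2 * (u - x0)) = 1 / (2 * (1 - x0)) * (1 / u) + 1 / (1 - x0) * (1 / (u - 1))
        + - 1 / (2 * (1 - x0)) * (1 / u + 1 / (u - 1) + 1 / (u - x0))"
      using ball_avoids_branch_points[of k u] by (simp add: divide_simps) (simp add: algebra_simps)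
  qed
  also have "\<dots> = (P (\<lambda>u. 1 / u) x0 + 2 * P (\<lambda>u. 1 / (u - 1)) x0) / (2 * (1 - x0))"
    unfolding exact using x0_nz by (simp add: divide_simps) (simp add: algebra_simps)
  finally show "P (\<lambda>u. 1 / (u - 1) / (2 * (u - x0))) x0
      = (P (\<lambda>u. 1 / u) x0 + 2 * P (\<lambda>u. 1 / (u - 1)) x0) / (2 * (1 - x0))" .
qed

lemma has_field_derivative_periods:
  assumes x0_nz: "x0 \<noteq> 0" "x0 \<noteq> 1"
  defines "p1 \<equiv> \<lambda>x. curve_period (\<lambda>u. 1 / u) (g x) (v x)"
    and "p2 \<equiv> \<lambda>x. curve_period (\<lambda>u. 1 / (u - 1)) (g x) (v x)"
  shows "(p1 has_field_derivative (-2 * p1 x0 - p2 x0) / (2 * x0)) (at x0)"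
    and "(p2 has_field_derivative (p1 x0 + 2 * p2 x0) / (2 * (1 - x0))) (at x0)"
proof -
  have dx0: "dist x0 x0 < \<rho>" using r by simp
  have "(\<lambda>u. 1 / u) holomorphic_on ball (c k) (3*\<rho>)" "(\<lambda>u. 1 / (u - 1)) holomorphic_on ball (c k) (3*\<rho>)"
    if "k \<le> N" for k
    by (intro holomorphic_intros; use ball_avoids_branch_points[OF that] in blast)+
  then have p: "p1 x = chain_period c A x0 N (\<lambda>u. 1 / u) x" "p2 x = chain_period c A x0 N (\<lambda>u. 1 / (u - 1)) x"
    if "x \<in> ball x0 r" for x
    unfolding p1_def p2_def using period_eq_chain_period[OF that] by auto
  note partial_fractions = chain_period_partial_fractions[OF x0_nz, folded p[OF centre_in_ball]]
  show "(p1 has_field_derivative (-2 * p1 x0 - p2 x0) / (2 * x0)) (at x0)"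
    using has_field_derivative_transform_within_open[OF has_field_derivative_chain_period[OF chain dx0
        continuous_on_period_integrands(1)] open_ball centre_in_ball, of p1] p partial_fractions(1) by auto
  show "(p2 has_field_derivative (p1 x0 + 2 * p2 x0) / (2 * (1 - x0))) (at x0)"
    using has_field_derivative_transform_within_open[OF has_field_derivative_chain_period[OF chain dx0
        continuous_on_period_integrands(2)] open_ball centre_in_ball, of p2] p partial_fractions(2) by auto
qed

end

lemma lifted_cycle_family_subdivided:
  assumes U: "open U" and fam: "lifted_cycle_family U g v" and x0: "x0 \<in> U"
  shows "\<exists>N \<rho> r. subdivided_cycle U g v x0 (\<lambda>k. g x0 (real k / N)) (\<lambda>k. v x0 (real k / N)) N \<rho> r"
proof -
  note g0 = lifted_cycle_familyD[OF fam x0]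
  have cg0: "continuous_on {0..1} (g x0)"
    using g0(1) unfolding valid_path_def piecewise_C1_differentiable_on_def by auto
  obtain \<delta>0 \<delta>1 \<delta>x where \<delta>: "\<delta>0 > 0" "\<delta>1 > 0" "\<delta>x > 0"
    and far: "\<And>t. t \<in> {0..1} \<Longrightarrow> \<delta>0 \<le> norm (g x0 t - 0) \<and> \<delta>1 \<le> norm (g x0 t - 1) \<and> \<delta>x \<le> norm (g x0 t - x0)"
    using continuous_on_bounded_away[OF compact_Icc cg0, of 0] continuous_on_bounded_away[OF compact_Icc cg0, of 1]
      continuous_on_bounded_away[OF compact_Icc cg0, of x0] g0(4) by metis
  define \<rho> where "\<rho> = min \<delta>0 (min \<delta>1 \<delta>x) / 5"
  have \<rho>: "\<rho> > 0" using \<delta> by (simp add: \<rho>_def)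
  obtain N where N: "N > 0"
    and osc: "\<And>k s. k < N \<Longrightarrow> s \<in> {real k / N .. real (Suc k) / N} \<Longrightarrow> norm (g x0 s - g x0 (real k / N)) < \<rho>"
    using uniform_partition_small_oscillation[OF cg0 \<rho>] by (metis dist_norm)
  obtain r where r: "r > 0" "ball x0 r \<subseteq> U" "\<And>x t. x \<in> ball x0 r \<Longrightarrow> t \<in> {0..1} \<Longrightarrow> norm (g x t - g x0 t) < \<rho>"
    using continuous_on_uniformly_close[OF U x0 lifted_cycle_family_continuous(1)[OF fam] \<rho>] by (metis dist_norm)
  have ch: "branch_chain (\<lambda>k. g x0 (real k / N)) (\<lambda>k. v x0 (real k / N)) x0 N \<rho>"
    unfolding branch_chain_def
  proof (intro conjI allI impI \<rho>)
    fix k assume "k \<le> N"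
    then have k01: "real k / N \<in> {0..1}" using N by (auto simp: divide_simps)
    show "4 * \<rho> < cmod (g x0 (real k / N))" "4 * \<rho> < cmod (g x0 (real k / N) - 1)"
      "4 * \<rho> < cmod (g x0 (real k / N) - x0)" using far[OF k01] \<delta> by (auto simp: \<rho>_def)
    show "(v x0 (real k / N))\<^sup>2 = g x0 (real k / N) * (g x0 (real k / N) - 1) * (g x0 (real k / N) - x0)"
      using g0(4)[OF k01] by auto
  next
    fix k assume k: "k < N"
    have "real (Suc k) / N \<in> {real k / N .. real (Suc k) / N}" using N by (auto simp: divide_simps)
    then show "cmod (g x0 (real (Suc k) / N) - g x0 (real k / N)) < \<rho>" by (rule osc[OF k])
  qed
  have "subdivided_cycle U g v x0 (\<lambda>k. g x0 (real k / N)) (\<lambda>k. v x0 (real k / N)) N \<rho> (min r \<rho>)"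
    using fam x0 ch N r osc \<rho> by unfold_locales auto
  then show ?thesis by blast
qed

definition gauss_manin_system :: "complex set \<Rightarrow> (complex \<Rightarrow> complex) \<Rightarrow> (complex \<Rightarrow> complex) \<Rightarrow> bool" where
  "gauss_manin_system U a1 a2 \<longleftrightarrow>
     (\<forall>x\<in>U. (a1 has_field_derivative (-2 * a1 x - a2 x) / (2 * x)) (at x) \<and>
            (a2 has_field_derivative (a1 x + 2 * a2 x) / (2 * (1 - x))) (at x))"

lemma gauss_manin_system_periods:
  assumes U: "open U" "U \<inter> {0, 1} = {}" and family: "lifted_cycle_family U g v"
  shows "gauss_manin_system U (\<lambda>x. curve_period (\<lambda>u. 1 / u) (g x) (v x))
                              (\<lambda>x. curve_period (\<lambda>u. 1 / (u - 1)) (g x) (v x))"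
  unfolding gauss_manin_system_def
proof
  fix x0 assume x0: "x0 \<in> U"
  obtain N \<rho> r where "subdivided_cycle U g v x0 (\<lambda>k. g x0 (real k / N)) (\<lambda>k. v x0 (real k / N)) N \<rho> r"
    using lifted_cycle_family_subdivided[OF U(1) family x0] by blast
  then interpret subdivided_cycle U g v x0 "\<lambda>k. g x0 (real k / N)" "\<lambda>k. v x0 (real k / N)" N \<rho> r .
  have "x0 \<noteq> 0" "x0 \<noteq> 1" using x0 U(2) by auto
  show "((\<lambda>x. curve_period (\<lambda>u. 1 / u) (g x) (v x)) has_field_derivative
          (-2 * curve_period (\<lambda>u. 1 / u) (g x0) (v x0) - curve_period (\<lambda>u. 1 / (u - 1)) (g x0) (v x0)) / (2 * x0)) (at x0) \<and>
        ((\<lambda>x. curve_period (\<lambda>u. 1 / (u - 1)) (g x) (v x)) has_field_derivative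
          (curve_period (\<lambda>u. 1 / u) (g x0) (v x0) + 2 * curve_period (\<lambda>u. 1 / (u - 1)) (g x0) (v x0)) / (2 * (1 - x0))) (at x0)"
    using has_field_derivative_periods[OF \<open>x0 \<noteq> 0\<close> \<open>x0 \<noteq> 1\<close>] by (rule conjI)
qed

lemma gauss_manin_system_lincomb:
  assumes "gauss_manin_system U f1 f2" "gauss_manin_system U g1 g2"
  shows "gauss_manin_system U (\<lambda>x. c1 * f1 x + c2 * g1 x) (\<lambda>x. c1 * f2 x + c2 * g2 x)"
  unfolding gauss_manin_system_def
proof
  fix x assume "x \<in> U"
  then have d: "(f1 has_field_derivative (-2 * f1 x - f2 x) / (2 * x)) (at x)"
    "(f2 has_field_derivative (f1 x + 2 * f2 x) / (2 * (1 - x))) (at x)"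
    "(g1 has_field_derivative (-2 * g1 x - g2 x) / (2 * x)) (at x)"
    "(g2 has_field_derivative (g1 x + 2 * g2 x) / (2 * (1 - x))) (at x)"
    using assms unfolding gauss_manin_system_def by auto
  have lincomb: "c1 * (P / d) + c2 * (Q / d) = (c1 * P + c2 * Q) / d" for P Q d :: complex
    by (simp add: add_divide_distrib)
  show "((\<lambda>x. c1 * f1 x + c2 * g1 x) has_field_derivative
           (-2 * (c1 * f1 x + c2 * g1 x) - (c1 * f2 x + c2 * g2 x)) / (2 * x)) (at x) \<and>
        ((\<lambda>x. c1 * f2 x + c2 * g2 x) has_field_derivative
           (c1 * f1 x + c2 * g1 x + 2 * (c1 * f2 x + c2 * g2 x)) / (2 * (1 - x))) (at x)"
  proof
    show "((\<lambda>x. c1 * f1 x + c2 * g1 x) has_field_derivative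
           (-2 * (c1 * f1 x + c2 * g1 x) - (c1 * f2 x + c2 * g2 x)) / (2 * x)) (at x)"
      using DERIV_add[OF DERIV_cmult[OF d(1)] DERIV_cmult[OF d(3)], of c1 c2] unfolding lincomb
      by (rule DERIV_cong) (simp add: algebra_simps)
    show "((\<lambda>x. c1 * f2 x + c2 * g2 x) has_field_derivative
           (c1 * f1 x + c2 * g1 x + 2 * (c1 * f2 x + c2 * g2 x)) / (2 * (1 - x))) (at x)"
      using DERIV_add[OF DERIV_cmult[OF d(2)] DERIV_cmult[OF d(4)], of c1 c2] unfolding lincomb
      by (rule DERIV_cong) (simp add: algebra_simps)
  qed
qed

section \<open>From the Gauss--Manin system to Painleve VI\<close>

lemma gauss_manin_system_derivs:
  assumes "gauss_manin_system U a1 a2" "x \<in> U" "x \<noteq> 0" "x \<noteq> 1"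
  shows "((\<lambda>x. x * a1 x) has_field_derivative - a2 x / 2) (at x)"
    and "((\<lambda>x. (x - 1) * a2 x) has_field_derivative - a1 x / 2) (at x)"
    and "((\<lambda>x. x * a1 x ^ 2 + (1 - x) * a2 x ^ 2) has_field_derivative a2 x ^ 2 - a1 x ^ 2) (at x)"
proof -
  define A1 where "A1 = (-2 * a1 x - a2 x) / (2 * x)"
  define A2 where "A2 = (a1 x + 2 * a2 x) / (2 * (1 - x))"
  have d: "(a1 has_field_derivative A1) (at x)" "(a2 has_field_derivative A2) (at x)"
    using assms(1,2) unfolding gauss_manin_system_def A1_def A2_def by auto
  have e: "2 * x * A1 = -2 * a1 x - a2 x" "2 * (1 - x) * A2 = a1 x + 2 * a2 x"
    using assms(3,4) unfolding A1_def A2_def by simp_all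
  show "((\<lambda>x. x * a1 x) has_field_derivative - a2 x / 2) (at x)"
    "((\<lambda>x. (x - 1) * a2 x) has_field_derivative - a1 x / 2) (at x)"
    "((\<lambda>x. x * a1 x ^ 2 + (1 - x) * a2 x ^ 2) has_field_derivative a2 x ^ 2 - a1 x ^ 2) (at x)"
    by (rule derivative_eq_intros d refl | use e in \<open>simp; algebra\<close>)+
qed

lemma gauss_manin_system_quotient_derivs:
  assumes gm: "gauss_manin_system U a1 a2" and x: "x \<in> U" "x \<noteq> 0" "x \<noteq> 1"
    and D: "x * a1 x + (x - 1) * a2 x \<noteq> 0"
  shows "((\<lambda>x. x * a1 x / (x * a1 x + (x - 1) * a2 x)) has_field_derivative
           (x * a1 x ^ 2 + (1 - x) * a2 x ^ 2) / (2 * (x * a1 x + (x - 1) * a2 x) ^ 2)) (at x)"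
    and "((\<lambda>x. (x * a1 x ^ 2 + (1 - x) * a2 x ^ 2) / (2 * (x * a1 x + (x - 1) * a2 x) ^ 2)) has_field_derivative
           ((a2 x ^ 2 - a1 x ^ 2) * (x * a1 x + (x - 1) * a2 x) + (x * a1 x ^ 2 + (1 - x) * a2 x ^ 2) * (a1 x + a2 x))
           / (2 * (x * a1 x + (x - 1) * a2 x) ^ 3)) (at x)"
proof -
  define P where "P = (\<lambda>x. x * a1 x)"
  define Q where "Q = (\<lambda>x. (x - 1) * a2 x)"
  define M where "M = (\<lambda>x. x * a1 x ^ 2 + (1 - x) * a2 x ^ 2)"
  have d: "(P has_field_derivative - a2 x / 2) (at x)" "(Q has_field_derivative - a1 x / 2) (at x)"
    "(M has_field_derivative a2 x ^ 2 - a1 x ^ 2) (at x)"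
    unfolding P_def Q_def M_def using gauss_manin_system_derivs[OF gm x] by auto
  have D': "P x + Q x \<noteq> 0" using D by (simp add: P_def Q_def)
  have M: "M x = P x * a1 x - Q x * a2 x" by (simp add: P_def Q_def M_def power2_eq_square algebra_simps)
  have dD: "((\<lambda>x. P x + Q x) has_field_derivative - (a1 x + a2 x) / 2) (at x)"
    using DERIV_add[OF d(1,2)] by (simp add: field_simps)
  have eq1: "(- b / 2 * (p + q) - p * (- (a + b) / 2)) / ((p + q) * (p + q)) = (p * a - q * b) / (2 * (p + q)\<^sup>2)"
    if "p + q \<noteq> 0" for p q a b :: complex
    using that by (simp add: field_simps power2_eq_square)
  have quotient: "((\<lambda>x. P x / (P x + Q x)) has_field_derivative M x / (2 * (P x + Q x)\<^sup>2)) (at x)"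
    unfolding M using DERIV_divide[OF d(1) dD D'] by (rule DERIV_cong) (rule eq1[OF D'])
  have dN: "((\<lambda>x. 2 * (P x + Q x)\<^sup>2) has_field_derivative - 2 * (a1 x + a2 x) * (P x + Q x)) (at x)"
    using DERIV_cmult[OF DERIV_power[OF dD, of 2], of 2] by (rule DERIV_cong) simp
  have eq2: "(e * (2 * D\<^sup>2) - m * (- 2 * s * D)) / (2 * D\<^sup>2 * (2 * D\<^sup>2)) = (e * D + m * s) / (2 * D ^ 3)"
    if "D \<noteq> 0" for e m s D :: complex
    using that by (simp add: field_simps power2_eq_square power3_eq_cube)
  have "2 * (P x + Q x)\<^sup>2 \<noteq> 0" using D' by simp
  from DERIV_divide[OF d(3) dN this]
  have quotient': "((\<lambda>x. M x / (2 * (P x + Q x)\<^sup>2)) has_field_derivative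
      ((a2 x ^ 2 - a1 x ^ 2) * (P x + Q x) + M x * (a1 x + a2 x)) / (2 * (P x + Q x) ^ 3)) (at x)"
    by (rule DERIV_cong) (rule eq2[OF D'])
  show
    "((\<lambda>x. x * a1 x / (x * a1 x + (x - 1) * a2 x)) has_field_derivative
       (x * a1 x ^ 2 + (1 - x) * a2 x ^ 2) / (2 * (x * a1 x + (x - 1) * a2 x) ^ 2)) (at x)"
    "((\<lambda>x. (x * a1 x ^ 2 + (1 - x) * a2 x ^ 2) / (2 * (x * a1 x + (x - 1) * a2 x) ^ 2)) has_field_derivative
       ((a2 x ^ 2 - a1 x ^ 2) * (x * a1 x + (x - 1) * a2 x) + (x * a1 x ^ 2 + (1 - x) * a2 x ^ 2) * (a1 x + a2 x))
       / (2 * (x * a1 x + (x - 1) * a2 x) ^ 3)) (at x)"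
    using quotient quotient' unfolding P_def Q_def M_def by simp_all
qed

lemma painleve_VI_numerator_identity:
  fixes p q x :: complex
  shows "4*p*q*((1 - x) * p + x * q)*((q*q*x*x-p*p*(1-x)^2)*(p - q)+(p*p*(1-x) + q*q*x)*((1 - x) * p + x * q))
   = (q*((1 - x) * p + x * q)+p*((1 - x) * p + x * q)+p*q)*(p*p*(1-x) + q*q*x)^2 - 4*p*q*(-(2*x-1)*((1 - x) * p + x * q)+(x * (1 - x))*(p - q))*(p*p*(1-x) + q*q*x)*(p - q) + (p*p*q*q*((1 - x) * p + x * q)*((1 - x) * p + x * q) - q*q*((1 - x) * p + x * q)*((1 - x) * p + x * q)*x*(p - q)*(p - q) - p*p*((1 - x) * p + x * q)*((1 - x) * p + x * q)*(1-x)*(p - q)*(p - q) - 3*p*p*q*q*(x * (1 - x))*(p - q)*(p - q))"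
  by (simp add: algebra_simps power2_eq_square)

lemma painleve_VI_rhs_common_denominator:
  fixes p q s D m w x :: complex
  assumes n: "p \<noteq> 0" "q \<noteq> 0" "s \<noteq> 0" "D \<noteq> 0" "w \<noteq> 0" "x \<noteq> 0"
  shows "1/2 * (D/p + D/q + D/s) * (m / (2 * w * D^2))\<^sup>2
            - (- (2*x-1)/w + D/s) * (m / (2 * w * D^2))
            + (p/D) * (q/D) * (s/D) / w\<^sup>2
              * (1/8 + (-1/8) * x / (p/D)\<^sup>2 + 1/8 * (x - 1) / (q/D)\<^sup>2 + 3/8 * (-w) / (s/D)\<^sup>2)
   = ((q * s+p * s+p*q)*m^2 - 4*p*q*(-(2*x-1) * s+w*D)*m*D + (p*p*q*q * s * s - q*q * s * s*x*D*D - p*p * s * s*(1-x)*D*D - 3*p*p*q*q*w*D*D))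
      / (8 * w^2 * D^3 * (p*q * s))"
proof -
  let ?den = "8 * w^2 * D^3 * (p*q * s)"
  have t1: "1/2 * (D/p + D/q + D/s) * (m / (2 * w * D^2))\<^sup>2 = ((q * s+p * s+p*q)*m^2) / ?den"
    using n by (simp add: field_simps power2_eq_square power3_eq_cube)
  have t2: "(- (2*x-1)/w + D/s) * (m / (2 * w * D^2)) = (4*p*q*(-(2*x-1) * s+w*D)*m*D) / ?den"
    using n by (simp add: field_simps power2_eq_square power3_eq_cube)
  have t3: "(p/D) * (q/D) * (s/D) / w\<^sup>2 * (1/8 + (-1/8) * x / (p/D)\<^sup>2 + 1/8 * (x - 1) / (q/D)\<^sup>2 + 3/8 * (-w) / (s/D)\<^sup>2)
      = (p*p*q*q * s * s - q*q * s * s*x*D*D - p*p * s * s*(1-x)*D*D - 3*p*p*q*q*w*D*D) / ?den"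
    using n by (simp add: field_simps power2_eq_square power3_eq_cube)
  show ?thesis unfolding t1 t2 t3 by (simp add: diff_divide_distrib add_divide_distrib)
qed

lemma painleve_VI_rhs_quotient:
  fixes p q x :: complex
  defines "D \<equiv> p - q" and "s \<equiv> (1 - x) * p + x * q" and "w \<equiv> x * (1 - x)"
    and "m \<equiv> p*p*(1-x) + q*q*x"
  assumes Y: "Y = p / D" and Y1: "Y1 = m / (2 * w * D^2)"
    and nz: "p \<noteq> 0" "q \<noteq> 0" "D \<noteq> 0" "s \<noteq> 0" and x: "x \<noteq> 0" "x \<noteq> 1"
  shows "((q*q*x*x - p*p*(1-x)^2) * D + m * s) / (2 * w^2 * D^3)
       = 1/2 * (1/Y + 1/(Y - 1) + 1/(Y - x)) * Y1\<^sup>2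
            - (1/x + 1/(x - 1) + 1/(Y - x)) * Y1
            + Y * (Y - 1) * (Y - x) / (x\<^sup>2 * (x - 1)\<^sup>2)
              * (1/8 + (-1/8) * x / Y\<^sup>2 + 1/8 * (x - 1) / (Y - 1)\<^sup>2 + 3/8 * x * (x - 1) / (Y - x)\<^sup>2)"
proof -
  have w: "w \<noteq> 0" using x unfolding w_def by simp
  have Y_1: "Y - 1 = q / D" and Yx: "Y - x = s / D"
    using nz(3) unfolding Y D_def s_def by (simp_all add: field_simps)
  have "1/Y = D/p" "1/(Y - 1) = D/q" "1/(Y - x) = D/s" "Y\<^sup>2 = (p/D)\<^sup>2" "(Y - 1)\<^sup>2 = (q/D)\<^sup>2" "(Y - x)\<^sup>2 = (s/D)\<^sup>2"
      "Y * (Y - 1) * (Y - x) = (p/D) * (q/D) * (s/D)"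
    unfolding Y_1 Yx by (simp_all add: Y)
  moreover have "x\<^sup>2 * (x - 1)\<^sup>2 = w\<^sup>2" "3/8 * x * (x - 1) = 3/8 * (-w)"
    unfolding w_def by (simp_all add: algebra_simps power2_eq_square)
  moreover have "1/x + 1/(x - 1) = - (2*x-1)/w" using x unfolding w_def by (simp add: field_simps)
  ultimately have "1/2 * (1/Y + 1/(Y - 1) + 1/(Y - x)) * Y1\<^sup>2
            - (1/x + 1/(x - 1) + 1/(Y - x)) * Y1
            + Y * (Y - 1) * (Y - x) / (x\<^sup>2 * (x - 1)\<^sup>2)
              * (1/8 + (-1/8) * x / Y\<^sup>2 + 1/8 * (x - 1) / (Y - 1)\<^sup>2 + 3/8 * x * (x - 1) / (Y - x)\<^sup>2)
     = ((q * s+p * s+p*q)*m^2 - 4*p*q*(-(2*x-1) * s+w*D)*m*D + (p*p*q*q * s * s - q*q * s * s*x*D*D - p*p * s * s*(1-x)*D*D - 3*p*p*q*q*w*D*D))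
      / (8 * w^2 * D^3 * (p*q * s))"
    unfolding Y1 by (simp only: painleve_VI_rhs_common_denominator[OF nz(1,2,4,3) w x(1)])
  also have "\<dots> = (4*p*q * s*((q*q*x*x-p*p*(1-x)^2)*D+m * s)) / (8 * w^2 * D^3 * (p*q * s))"
    unfolding D_def s_def m_def w_def by (simp only: painleve_VI_numerator_identity)
  also have "\<dots> = ((q*q*x*x - p*p*(1-x)^2) * D + m * s) / (2 * w^2 * D^3)"
    using nz w by (simp add: field_simps power3_eq_cube)
  finally show ?thesis ..
qed

lemma painleve_VI_quotient_identity:
  fixes x a1 a2 :: complex
  assumes x: "x \<noteq> 0" "x \<noteq> 1" and Dn: "x * a1 + (x - 1) * a2 \<noteq> 0"
    and a: "a1 \<noteq> 0" "a2 \<noteq> 0" "a1 + a2 \<noteq> 0"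
    and Y: "Y = x * a1 / (x * a1 + (x - 1) * a2)"
    and Y1: "Y1 = (x * a1^2 + (1 - x) * a2^2) / (2 * (x * a1 + (x - 1) * a2)^2)"
    and Y2: "Y2 = ((a2^2 - a1^2) * (x * a1 + (x - 1) * a2) + (x * a1^2 + (1 - x) * a2^2) * (a1 + a2)) / (2 * (x * a1 + (x - 1) * a2)^3)"
  shows "Y2 = 1/2 * (1/Y + 1/(Y - 1) + 1/(Y - x)) * Y1\<^sup>2
            - (1/x + 1/(x - 1) + 1/(Y - x)) * Y1
            + Y * (Y - 1) * (Y - x) / (x\<^sup>2 * (x - 1)\<^sup>2)
              * (1/8 + (-1/8) * x / Y\<^sup>2 + 1/8 * (x - 1) / (Y - 1)\<^sup>2 + 3/8 * x * (x - 1) / (Y - x)\<^sup>2)"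
proof -
  define p where "p = x * a1"
  define q where "q = (1 - x) * a2"
  define w where "w = x * (1 - x)"
  define m where "m = p*p*(1-x) + q*q*x"
  have x1: "1 - x \<noteq> 0" using x by auto
  have w: "w \<noteq> 0" using x x1 unfolding w_def by simp
  have D: "x * a1 + (x - 1) * a2 = p - q" unfolding p_def q_def by (simp add: algebra_simps)
  have s: "(1 - x) * p + x * q = w * (a1 + a2)" unfolding p_def q_def w_def by (simp add: algebra_simps)
  have M: "x * a1^2 + (1 - x) * a2^2 = m / w"
    using x x1 unfolding m_def w_def p_def q_def by (simp add: field_simps power2_eq_square)
  have "q*q*x*x - p*p*(1-x)^2 = (a2^2 - a1^2) * w^2"
    unfolding w_def p_def q_def by (simp add: algebra_simps power2_eq_square)
  then have A2: "a2^2 - a1^2 = (q*q*x*x - p*p*(1-x)^2) / w^2"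
    using w by simp
  have A3: "a1 + a2 = ((1 - x) * p + x * q) / w" using w unfolding s by simp
  have "(A / w^2 * E + m / w * (S / w)) / (2 * E^3) = (A * E + m * S) / (2 * w^2 * E^3)" for A E S
    using w by (simp add: field_simps power2_eq_square)
  then have "Y2 = ((q*q*x*x - p*p*(1-x)^2) * (p - q) + m * ((1 - x) * p + x * q)) / (2 * w^2 * (p - q)^3)"
    unfolding Y2 D M A2 A3 .
  also have "\<dots> = 1/2 * (1/Y + 1/(Y - 1) + 1/(Y - x)) * Y1\<^sup>2
            - (1/x + 1/(x - 1) + 1/(Y - x)) * Y1
            + Y * (Y - 1) * (Y - x) / (x\<^sup>2 * (x - 1)\<^sup>2)
              * (1/8 + (-1/8) * x / Y\<^sup>2 + 1/8 * (x - 1) / (Y - 1)\<^sup>2 + 3/8 * x * (x - 1) / (Y - x)\<^sup>2)"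
    unfolding w_def m_def
  proof (rule painleve_VI_rhs_quotient)
    show "(1 - x) * p + x * q \<noteq> 0" using s w a by simp
    show "p \<noteq> 0" "q \<noteq> 0" "p - q \<noteq> 0" using x x1 a Dn unfolding D by (auto simp: p_def q_def)
    show "Y = p / (p - q)" using Y D by (simp add: p_def)
    show "Y1 = (p*p*(1-x) + q*q*x) / (2 * (x * (1 - x)) * (p - q)\<^sup>2)"
      unfolding Y1 D M using w by (simp add: field_simps m_def w_def)
  qed (use x in auto)
  finally show ?thesis .
qed

lemma quotient_notin_branch_points:
  fixes x a1 a2 :: complex
  assumes D: "x * a1 + (x - 1) * a2 \<noteq> 0" and y: "x * a1 / (x * a1 + (x - 1) * a2) \<notin> {0, 1, x}"
  shows "a1 \<noteq> 0" "a2 \<noteq> 0" "a1 + a2 \<noteq> 0"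
proof -
  show "a1 \<noteq> 0" using y by auto
  show "a2 \<noteq> 0" using y D by auto
  show "a1 + a2 \<noteq> 0"
  proof
    assume "a1 + a2 = 0"
    then have "x * a1 + (x - 1) * a2 = a1" by (simp add: algebra_simps add_eq_0_iff)
    then show False using y \<open>a1 \<noteq> 0\<close> by simp
  qed
qed

lemma gauss_manin_system_painleve_VI:
  assumes U: "open U" "U \<inter> {0, 1} = {}" and gm: "gauss_manin_system U a1 a2"
  shows "let y = (\<lambda>x. x * a1 x / (x * a1 x + (x - 1) * a2 x)) in
         y holomorphic_on {x \<in> U. x * a1 x + (x - 1) * a2 x \<noteq> 0} \<and>
         (\<forall>x\<in>U. x * a1 x + (x - 1) * a2 x \<noteq> 0 \<longrightarrow> y x \<notin> {0, 1, x} \<longrightarrow>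
            painleve_VI (1/8) (-1/8) (1/8) (3/8) y x)"
proof -
  define D where "D = (\<lambda>x. x * a1 x + (x - 1) * a2 x)"
  define W where "W = {x \<in> U. D x \<noteq> 0}"
  define y where "y = (\<lambda>x. x * a1 x / D x)"
  define y' where "y' = (\<lambda>x. (x * a1 x ^ 2 + (1 - x) * a2 x ^ 2) / (2 * D x ^ 2))"
  define y'' where
    "y'' = (\<lambda>x. ((a2 x ^ 2 - a1 x ^ 2) * D x + (x * a1 x ^ 2 + (1 - x) * a2 x ^ 2) * (a1 x + a2 x)) / (2 * D x ^ 3))"
  have x01: "x \<noteq> 0" "x \<noteq> 1" if "x \<in> U" for x using U(2) that by auto
  have "continuous_on U D"
    using gm unfolding D_def gauss_manin_system_def
    by (intro continuous_at_imp_continuous_on ballI continuous_intros DERIV_isCont) auto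
  then have W: "open W"
    using continuous_open_preimage[OF _ U(1) open_Compl[OF closed_singleton], of D 0]
    unfolding W_def by (simp add: vimage_def Int_def Compl_eq)
  have dy: "(y has_field_derivative y' x) (at x)" and dy': "(y' has_field_derivative y'' x) (at x)"
    if "x \<in> W" for x
    using gauss_manin_system_quotient_derivs[OF gm, of x] x01[of x] that
    unfolding W_def y_def y'_def y''_def D_def by auto
  have holo: "y holomorphic_on W"
    using dy W by (auto simp: holomorphic_on_open)
  have "painleve_VI (1/8) (-1/8) (1/8) (3/8) y x"
    if x: "x \<in> W" and yx: "y x \<notin> {0, 1, x}" for x
  proof -
    have xU: "x \<in> U" and Dx: "D x \<noteq> 0" using x unfolding W_def by auto
    have y1: "deriv y x = y' x" by (rule DERIV_imp_deriv[OF dy[OF x]])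
    have "(deriv y has_field_derivative y'' x) (at x)"
      using has_field_derivative_transform_within_open[OF dy'[OF x] W x, of "deriv y"] DERIV_imp_deriv[OF dy]
      by auto
    then have y2: "deriv (deriv y) x = y'' x"
      by (rule DERIV_imp_deriv)
    have "a1 x \<noteq> 0" "a2 x \<noteq> 0" "a1 x + a2 x \<noteq> 0"
      using quotient_notin_branch_points Dx yx unfolding y_def D_def by blast+
    then show ?thesis
      unfolding painleve_VI_def Let_def y1 y2 y'_def y''_def
      by (rule painleve_VI_quotient_identity[OF x01[OF xU] Dx[unfolded D_def]])
         (simp_all add: y_def D_def)
  qed
  then show ?thesis unfolding Let_def using holo unfolding y_def W_def D_def by auto
qed

theorem mainTheorem5:
  fixes U :: "complex set"
    and gA gB vA vB :: "complex \<Rightarrow> real \<Rightarrow> complex"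
    and c1 c2 :: complex
  assumes "open U" and "U \<inter> {0, 1} = {}"
    and "lifted_cycle_family U gA vA"
    and "lifted_cycle_family U gB vB"
  defines "a1 \<equiv> \<lambda>x. c1 * curve_period (\<lambda>u. 1 / u) (gA x) (vA x)
                     + c2 * curve_period (\<lambda>u. 1 / u) (gB x) (vB x)"
    and "a2 \<equiv> \<lambda>x. c1 * curve_period (\<lambda>u. 1 / (u - 1)) (gA x) (vA x)
                     + c2 * curve_period (\<lambda>u. 1 / (u - 1)) (gB x) (vB x)"
  shows "let y = (\<lambda>x. x * a1 x / (x * a1 x + (x - 1) * a2 x)) in
         y holomorphic_on {x \<in> U. x * a1 x + (x - 1) * a2 x \<noteq> 0} \<and>
         (\<forall>x\<in>U. x * a1 x + (x - 1) * a2 x \<noteq> 0 \<longrightarrow> y x \<notin> {0, 1, x} \<longrightarrow>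
            painleve_VI (1/8) (-1/8) (1/8) (3/8) y x)"
proof -
  have "gauss_manin_system U a1 a2"
    unfolding a1_def a2_def using assms(1-4)
    by (intro gauss_manin_system_lincomb gauss_manin_system_periods)
  then show ?thesis
    by (rule gauss_manin_system_painleve_VI[OF assms(1,2)])
qed

end
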